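(* Let $n\ge1$ and let $f\colon[0,1]^n\to\mathbb{R}$ be a Lovász extension. Then $f_L=\mathrm{Sym}(f)$ and $$\mathrm{Sym}(f)=f(\mathbf{0})+\sum_{i=1}^n I(f,i)\,\mathrm{os}_i.$$
   Context: $S_n$ is the symmetric group on $\{1,\ldots,n\}$; for $\pi\in S_n$, $[0,1]^n_\pi=\{\mathbf{x}:x_{\pi(1)}<\cdots<x_{\pi(n)}\}$. A Lovász extension is a continuous function $f\colon[0,1]^n\to\mathbb{R}$ which, on each $[0,1]^n_\pi$, coincides with the unique affine function agreeing with $f$ at the $n+1$ vertices $\mathbf{1}_{\{\pi(i),\ldots,\pi(n)\}}$ ($i=1,\ldots,n+1$), where $\mathbf{1}_S$ is the characteristic vector of $S$ and $\mathbf{0}=\mathbf{1}_\varnothing$. $S_n$ acts by $\pi(f)(x_1,\ldots,x_n)=f(x_{\pi(1)},\ldots,x_{\pi(n)})$ and $\mathrm{Sym}(f)=\frac1{n!}\sum_{\pi}\pi(f)$. For $\mathbf{x}\in[0,1]^n$, $x_{(1)}\le\cdots\le x_{(n)}$ are its coordinates in ascending order, $\mathrm{os}_i(\mathbf{x})=x_{(i)}$, with $x_{(0)}=0$, $x_{(n+1)}=1$. $f_L$ is the best least squares (in $L^2([0,1]^n)$) approximation of $f$ by functions in the span of $1,\mathrm{os}_1,\ldots,\mathrm{os}_n$. The influence index is $I(f,k)=-(n+1)(n+2)\int_{[0,1]^n}f(\mathbf{x})\,\big(x_{(k+1)}-2x_{(k)}+x_{(k-1)}\big)\,d\mathbf{x}$.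 *)

theory Defs
  imports "HOL-Analysis.Analysis" "HOL-Library.Multiset"
begin

text \<open>Points of [0,1]^n are vectors of type real^'n, with n = CARD('n) (n \<ge> 1 automatically).
  The unit cube is cbox 0 1.\<close>

definition char_vec :: "'n::finite set \<Rightarrow> real^'n" where
  "char_vec S = (\<chi> j. if j \<in> S then 1 else 0)"

text \<open>A permutation of the coordinates, written as an enumeration
  sigma : {1..n} -> 'n (sigma i plays the role of pi(i)); the region [0,1]^n_pi.\<close>
definition perm_region :: "(nat \<Rightarrow> 'n::finite) \<Rightarrow> (real^'n) set" where
  "perm_region \<sigma> = {x \<in> cbox 0 1. \<forall>i j. 1 \<le> i \<longrightarrow> i < j \<longrightarrow> j \<le> CARD('n) \<longrightarrow> x $ \<sigma> i < x $ \<sigma> j}"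

definition lovasz_extension :: "(real^'n::finite \<Rightarrow> real) \<Rightarrow> bool" where
  "lovasz_extension f \<longleftrightarrow> continuous_on (cbox 0 1) f \<and>
     (\<forall>\<sigma>. bij_betw \<sigma> {1..CARD('n)} (UNIV :: 'n set) \<longrightarrow>
        (\<exists>(a::real^'n) (c::real).
           (\<forall>i\<in>{1..CARD('n)+1}. c + a \<bullet> char_vec (\<sigma> ` {i..CARD('n)}) = f (char_vec (\<sigma> ` {i..CARD('n)}))) \<and>
           (\<forall>x\<in>perm_region \<sigma>. f x = c + a \<bullet> x)))"

definition Sym :: "(real^'n::finite \<Rightarrow> real) \<Rightarrow> real^'n \<Rightarrow> real" where
  "Sym f x = (1 / fact CARD('n)) * (\<Sum>\<pi>\<in>{\<pi>. \<pi> permutes (UNIV :: 'n set)}. f (\<chi> i. x $ \<pi> i))"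

definition os :: "real^'n::finite \<Rightarrow> nat \<Rightarrow> real" where
  "os x i = (if i = 0 then 0
             else if i \<le> CARD('n) then
               sorted_list_of_multiset (image_mset (\<lambda>j. x $ j) (mset_set (UNIV :: 'n set))) ! (i - 1)
             else 1)"

definition os_span :: "(real^'n::finite \<Rightarrow> real) set" where
  "os_span = {g. \<exists>c::nat \<Rightarrow> real. g = (\<lambda>x. c 0 + (\<Sum>i=1..CARD('n). c i * os x i))}"

definition L2_dist_sq :: "(real^'n::finite \<Rightarrow> real) \<Rightarrow> (real^'n \<Rightarrow> real) \<Rightarrow> real" where
  "L2_dist_sq f g = integral (cbox 0 1) (\<lambda>x. (f x - g x)^2)"

definition f_L :: "(real^'n::finite \<Rightarrow> real) \<Rightarrow> real^'n \<Rightarrow> real" where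
  "f_L f = (THE g. g \<in> os_span \<and> (\<forall>h\<in>os_span. L2_dist_sq f g \<le> L2_dist_sq f h))"

definition influence :: "(real^'n::finite \<Rightarrow> real) \<Rightarrow> nat \<Rightarrow> real" where
  "influence f k = - (real CARD('n) + 1) * (real CARD('n) + 2) *
     integral (cbox 0 1) (\<lambda>x. f x * (os x (k+1) - 2 * os x k + os x (k-1)))"

end

theory Submission
  imports Defs "HOL-Combinatorics.List_Permutation"
begin

text \<open>
  On each region where the coordinates are ordered, a Lovasz extension is affine in the sorted
  coordinates, so its symmetrization is an affine combination f(0) + sum_i d_i os_i of the order
  statistics. The spacings os_l - os_(l-1), l = 1..n+1, of a uniform point of the cube are
  exchangeable: reflecting the coordinate that realises os_k inside the gap between its neighbours
  preserves Lebesgue measure and swaps the k-th and (k+1)-st spacing. Hence the second moments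
  of the spacings take only two values, and the second difference os_(k+1) - 2 os_k + os_(k-1) is
  orthogonal to the constants and to every os_j with j \<noteq> k, while its inner product with os_k is
  -1/((n+1)(n+2)). These test functions are symmetric, so f and Sym f have the same integrals
  against them, which identifies d_k as I(f,k). Finally f - Sym f is orthogonal to every symmetric
  function, in particular to the span of the order statistics, which contains Sym f; so Sym f is the
  least squares approximation, and the only one because the order statistics are linearly
  independent on the cube.
\<close>

abbreviation (input) cube :: "(real^'n::finite) set" where "cube \<equiv> cbox 0 1"

lemma mem_cube_iff: "x \<in> cube \<longleftrightarrow> (\<forall>a. 0 \<le> x $ a \<and> x $ a \<le> 1)"
  by (auto simp: mem_box_cart)

section \<open>Order statistics\<close>

lemma sorted_nth_iff_less_length_filter:
  fixes xs :: "'a::linorder list"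
  assumes "sorted xs" "j < length xs" and down: "\<And>u v. u \<le> v \<Longrightarrow> P v \<Longrightarrow> P u"
  shows "P (xs ! j) \<longleftrightarrow> j < length (filter P xs)"
  using assms(1,2)
proof (induction xs arbitrary: j)
  case (Cons a xs)
  show ?case
  proof (cases "P a")
    case True
    then show ?thesis using Cons by (cases j) auto
  next
    case False
    then have "\<forall>v\<in>set (a # xs). \<not> P v" using Cons.prems(1) down by auto
    then have "filter P (a # xs) = []" "\<not> P ((a # xs) ! j)"
      using Cons.prems(2) by (metis filter_empty_conv, metis nth_mem)
    then show ?thesis by simp
  qed
qed simp

definition os_list :: "real^'n::finite \<Rightarrow> real list" where
  "os_list x = sorted_list_of_multiset (image_mset (($) x) (mset_set UNIV))"

lemma mset_os_list: "mset (os_list x) = image_mset (($) x) (mset_set UNIV)"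
  and sorted_os_list: "sorted (os_list x)"
  by (simp_all add: os_list_def)

lemma length_os_list: "length (os_list (x::real^'n::finite)) = CARD('n)"
  by (metis mset_os_list size_image_mset size_mset size_mset_set)

lemma os_eq_nth_os_list: "1 \<le> i \<Longrightarrow> i \<le> CARD('n::finite) \<Longrightarrow> os (x::real^'n) i = os_list x ! (i - 1)"
  by (simp add: os_def os_list_def)

lemma length_filter_os_list:
  "length (filter P (os_list (x::real^'n::finite))) = card {a. P (x $ a)}"
proof -
  have "length (filter P (os_list x)) = size (filter_mset P (mset (os_list x)))"
    by (metis mset_filter size_mset)
  then show ?thesis by (simp add: mset_os_list filter_mset_image_mset)
qed

lemma os_downward_closed_iff:
  assumes "1 \<le> i" "i \<le> CARD('n::finite)" and down: "\<And>u v. u \<le> v \<Longrightarrow> P v \<Longrightarrow> P u"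
  shows "P (os (x::real^'n) i) \<longleftrightarrow> i \<le> card {a. P (x $ a)}"
proof -
  have "P (os x i) \<longleftrightarrow> i - 1 < length (filter P (os_list x))"
    using assms by (simp add: os_eq_nth_os_list sorted_nth_iff_less_length_filter sorted_os_list
      length_os_list)
  then show ?thesis using assms(1) by (simp add: length_filter_os_list, arith)
qed

lemma os_le_iff:
  "1 \<le> i \<Longrightarrow> i \<le> CARD('n::finite) \<Longrightarrow> os (x::real^'n) i \<le> t \<longleftrightarrow> i \<le> card {a. x $ a \<le> t}"
  by (rule os_downward_closed_iff) auto

lemma os_less_iff:
  "1 \<le> i \<Longrightarrow> i \<le> CARD('n::finite) \<Longrightarrow> os (x::real^'n) i < t \<longleftrightarrow> i \<le> card {a. x $ a < t}"
  by (rule os_downward_closed_iff) auto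

lemma eq_if_le_iff: "(\<And>t. (u::'a::order) \<le> t \<longleftrightarrow> v \<le> t) \<Longrightarrow> u = v"
  by (metis order.antisym order.refl)

lemma os_0 [simp]: "os x 0 = 0"
  and os_Suc_card [simp]: "os (x::real^'n::finite) (Suc CARD('n)) = 1"
  by (simp_all add: os_def)

lemma os_nonneg: "x \<in> cube \<Longrightarrow> 0 \<le> os (x::real^'n::finite) i"
proof (cases "1 \<le> i \<and> i \<le> CARD('n)")
  case True
  moreover assume "x \<in> cube"
  then have "{a. x $ a < 0} = {}" by (auto simp: mem_cube_iff not_less)
  ultimately have "\<not> os x i < 0" by (simp add: os_less_iff)
  then show ?thesis by simp
qed (auto simp: os_def)

lemma os_le_one: "x \<in> cube \<Longrightarrow> os (x::real^'n::finite) i \<le> 1"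
proof (cases "1 \<le> i \<and> i \<le> CARD('n)")
  case True
  moreover assume "x \<in> cube"
  then have "{a. x $ a \<le> 1} = UNIV" by (auto simp: mem_cube_iff)
  ultimately show ?thesis by (simp add: os_le_iff)
qed (auto simp: os_def)

lemma os_mono:
  assumes "x \<in> cube" "i \<le> j" "j \<le> Suc CARD('n::finite)"
  shows "os (x::real^'n) i \<le> os x j"
proof -
  consider "i = 0" | "j = Suc CARD('n)" | "1 \<le> i" "j \<le> CARD('n)" using assms by linarith
  then show ?thesis
  proof cases
    case 3
    have "j \<le> card {a. x $ a \<le> os x j}" using 3 assms by (simp add: os_le_iff[symmetric])
    then show ?thesis using 3 assms by (simp add: os_le_iff)
  qed (use os_nonneg[OF assms(1)] os_le_one[OF assms(1)] in auto)
qed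

lemma os_lipschitz: "\<bar>os (x::real^'n::finite) i - os y i\<bar> \<le> norm (x - y)"
proof (cases "1 \<le> i \<and> i \<le> CARD('n)")
  case True
  have *: "os y i \<le> os x i + norm (x - y)" for x y :: "real^'n"
  proof -
    have "{a. x $ a \<le> os x i} \<subseteq> {a. y $ a \<le> os x i + norm (x - y)}"
    proof
      fix a assume "a \<in> {a. x $ a \<le> os x i}"
      moreover have "\<bar>(x - y) $ a\<bar> \<le> norm (x - y)" by (rule component_le_norm_cart)
      ultimately show "a \<in> {a. y $ a \<le> os x i + norm (x - y)}" by auto
    qed
    moreover have "i \<le> card {a. x $ a \<le> os x i}" using True by (simp add: os_le_iff[symmetric])
    ultimately have "i \<le> card {a. y $ a \<le> os x i + norm (x - y)}"
      by (meson card_mono finite order_trans)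
    then show ?thesis using True by (simp add: os_le_iff)
  qed
  show ?thesis using *[of x y] *[of y x] by (auto simp: norm_minus_commute)
qed (auto simp: os_def)

lemma continuous_on_os [continuous_intros]:
  assumes "continuous_on S f"
  shows "continuous_on S (\<lambda>x. os (f x :: real^'n::finite) i)"
proof -
  have "uniformly_continuous_on UNIV (\<lambda>x::real^'n. os x i)"
    unfolding uniformly_continuous_on_def
  proof (intro allI impI)
    fix e :: real assume "0 < e"
    then show "\<exists>d>0. \<forall>x\<in>UNIV. \<forall>x'\<in>UNIV. dist x' x < d \<longrightarrow> dist (os x' i) (os x i) < e"
      using os_lipschitz by (intro exI[of _ e]) (auto simp: dist_norm intro: le_less_trans)
  qed
  then show ?thesis
    by (rule continuous_on_compose2[OF uniformly_continuous_imp_continuous assms]) auto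
qed

definition permute_vec :: "('n::finite \<Rightarrow> 'n) \<Rightarrow> real^'n \<Rightarrow> real^'n" where
  "permute_vec \<pi> x = (\<chi> a. x $ \<pi> a)"

lemma permute_vec_nth [simp]: "permute_vec \<pi> x $ a = x $ \<pi> a"
  by (simp add: permute_vec_def)

lemma os_permute_vec:
  fixes x :: "real^'n::finite"
  assumes "\<pi> permutes UNIV"
  shows "os (permute_vec \<pi> x) i = os x i"
proof (cases "1 \<le> i \<and> i \<le> CARD('n)")
  case True
  have card_eq: "card {a. x $ \<pi> a \<le> t} = card {a. x $ a \<le> t}" for t
  proof -
    have "{a. x $ \<pi> a \<le> t} = inv \<pi> ` {a. x $ a \<le> t}"
      using assms by (auto simp: image_iff permutes_inverses) (metis permutes_inverses(2))
    moreover have "inj (inv \<pi>)" using assms by (meson permutes_inj permutes_inv)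
    ultimately show ?thesis by (simp add: card_image inj_on_subset)
  qed
  have "os (permute_vec \<pi> x) i \<le> t \<longleftrightarrow> os x i \<le> t" for t
    using True os_le_iff[of i "permute_vec \<pi> x" t] os_le_iff[of i x t] card_eq[of t] by simp
  then show ?thesis by (rule eq_if_le_iff)
qed (auto simp: os_def)

lemma sum_os: "(\<Sum>i=1..CARD('n::finite). g (os (x::real^'n) i)) = (\<Sum>a\<in>UNIV. g (x $ a))"
proof -
  have "(\<Sum>i=1..CARD('n). g (os x i)) = (\<Sum>j<CARD('n). g (os_list x ! j))"
    by (rule sum.reindex_bij_witness[of _ Suc "\<lambda>i. i - 1"]) (auto simp: os_eq_nth_os_list)
  also have "\<dots> = sum_list (map g (os_list x))"
    by (simp add: sum_list_sum_nth length_os_list atLeast0LessThan)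
  also have "\<dots> = sum_mset (image_mset g (mset (os_list x)))"
    by (metis mset_map sum_mset_sum_list)
  also have "\<dots> = (\<Sum>a\<in>UNIV. g (x $ a))"
    by (simp add: mset_os_list image_mset.compositionality sum_unfold_sum_mset o_def)
  finally show ?thesis .
qed

lemma obtain_sorting_enumeration:
  obtains \<sigma> where "bij_betw \<sigma> {1..CARD('n::finite)} (UNIV::'n set)"
    "\<And>i. i \<in> {1..CARD('n)} \<Longrightarrow> (x::real^'n) $ \<sigma> i = os x i"
proof -
  obtain es :: "'n list" where es: "set es = UNIV" "distinct es"
    using finite_distinct_list[of "UNIV::'n set"] by auto
  have len: "length es = CARD('n)" using es by (metis distinct_card)
  have "mset (os_list x) = mset (map (($) x) es)"
    using es by (simp add: mset_os_list mset_set_set[symmetric])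
  from permutation_Ex_bij[OF this] obtain p where p: "bij_betw p {..<CARD('n)} {..<CARD('n)}"
    "\<And>i. i < CARD('n) \<Longrightarrow> os_list x ! i = map (($) x) es ! p i"
    by (auto simp: length_os_list len)
  define \<sigma> where "\<sigma> i = es ! p (i - 1)" for i
  have shift: "bij_betw (\<lambda>i. i - 1) {1..CARD('n)} {..<CARD('n)}"
    by (rule bij_betw_byWitness[of _ Suc]) auto
  have "bij_betw ((!) es) {..<CARD('n)} UNIV"
    using es len by (metis atLeast0LessThan bij_betw_nth lessThan_atLeast0)
  then have "bij_betw \<sigma> {1..CARD('n)} UNIV"
    unfolding \<sigma>_def using bij_betw_trans[OF bij_betw_trans[OF shift p(1)]] by (simp add: o_def)
  moreover have "x $ \<sigma> i = os x i" if "i \<in> {1..CARD('n)}" for i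
  proof -
    have "p (i - 1) < CARD('n)" using p(1) that by (auto simp: bij_betw_def)
    then show ?thesis using that p(2)[of "i - 1"] len by (auto simp: \<sigma>_def os_eq_nth_os_list)
  qed
  ultimately show ?thesis using that by blast
qed

section \<open>Lovasz extensions in terms of order statistics\<close>

definition lovasz_increment :: "(real^'n::finite \<Rightarrow> real) \<Rightarrow> (nat \<Rightarrow> 'n) \<Rightarrow> nat \<Rightarrow> real" where
  "lovasz_increment f \<sigma> i =
     f (char_vec (\<sigma> ` {i..CARD('n)})) - f (char_vec (\<sigma> ` {Suc i..CARD('n)}))"

lemma char_vec_empty [simp]: "char_vec {} = 0"
  by (simp add: char_vec_def vec_eq_iff)

lemma inner_char_vec: "a \<bullet> char_vec S = (\<Sum>j\<in>S. a $ j)"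
  by (simp add: inner_vec_def char_vec_def if_distrib sum.If_cases)

lemma lovasz_extension_on_perm_region:
  fixes f :: "real^'n::finite \<Rightarrow> real"
  assumes "lovasz_extension f" and \<sigma>: "bij_betw \<sigma> {1..CARD('n)} UNIV" and "y \<in> perm_region \<sigma>"
  shows "f y = f 0 + (\<Sum>i=1..CARD('n). y $ \<sigma> i * lovasz_increment f \<sigma> i)"
proof -
  let ?v = "\<lambda>i. char_vec (\<sigma> ` {i..CARD('n)})"
  obtain a c where vertex: "\<And>i. i \<in> {1..CARD('n)+1} \<Longrightarrow> c + a \<bullet> ?v i = f (?v i)"
    and affine: "f y = c + a \<bullet> y"
    using assms unfolding lovasz_extension_def by blast
  have "c = f 0" using vertex[of "CARD('n) + 1"] by simp
  have a: "a $ \<sigma> i = lovasz_increment f \<sigma> i" if "i \<in> {1..CARD('n)}" for i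
  proof -
    have "{i..CARD('n)} = insert i {Suc i..CARD('n)}" using that by auto
    then have "\<sigma> ` {i..CARD('n)} = insert (\<sigma> i) (\<sigma> ` {Suc i..CARD('n)})" by simp
    moreover have "\<sigma> i \<notin> \<sigma> ` {Suc i..CARD('n)}"
      using that bij_betw_imp_inj_on[OF \<sigma>] by (auto dest: inj_onD)
    ultimately have "a \<bullet> ?v i = a $ \<sigma> i + a \<bullet> ?v (Suc i)" by (simp add: inner_char_vec)
    then show ?thesis using vertex[of i] vertex[of "Suc i"] that by (simp add: lovasz_increment_def)
  qed
  have "a \<bullet> y = (\<Sum>i=1..CARD('n). a $ \<sigma> i * y $ \<sigma> i)"
    using sum.reindex_bij_betw[OF \<sigma>, of "\<lambda>j. a $ j * y $ j"] by (simp add: inner_vec_def)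
  then show ?thesis
    using affine \<open>c = f 0\<close> a by (simp add: mult.commute)
qed

text \<open>Points with ties are limits of points of perm_region along the segment towards the strictly
  increasing point with coordinates i/(n+1), and both sides are continuous.\<close>

lemma lovasz_extension_sorted:
  fixes f :: "real^'n::finite \<Rightarrow> real"
  assumes lov: "lovasz_extension f" and \<sigma>: "bij_betw \<sigma> {1..CARD('n)} UNIV" and x: "x \<in> cube"
    and sorted: "\<And>i j. 1 \<le> i \<Longrightarrow> i \<le> j \<Longrightarrow> j \<le> CARD('n) \<Longrightarrow> x $ \<sigma> i \<le> x $ \<sigma> j"
  shows "f x = f 0 + (\<Sum>i=1..CARD('n). x $ \<sigma> i * lovasz_increment f \<sigma> i)"
proof -
  define R where "R y = f 0 + (\<Sum>i=1..CARD('n). y $ \<sigma> i * lovasz_increment f \<sigma> i)" for y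
  define w :: "real^'n" where "w = (\<chi> a. real (inv_into {1..CARD('n)} \<sigma> a) / real (CARD('n) + 1))"
  have w\<sigma>: "w $ \<sigma> i = real i / real (CARD('n) + 1)" if "i \<in> {1..CARD('n)}" for i
    using \<sigma> that by (simp add: w_def bij_betw_inv_into_left)
  have "inv_into {1..CARD('n)} \<sigma> a \<le> CARD('n) + 1" for a
    using bij_betwE[OF bij_betw_inv_into[OF \<sigma>]]
    by (metis UNIV_I atLeastAtMost_iff le_SucI Suc_eq_plus1)
  then have "w \<in> cube"
    by (simp add: w_def mem_cube_iff) (metis add.commute of_nat_Suc of_nat_le_iff)
  define y where "y e = (1 - e) *\<^sub>R x + e *\<^sub>R w" for e :: real
  have "y e \<in> perm_region \<sigma>" if e: "0 < e" "e < 1" for e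
    unfolding perm_region_def
  proof (intro CollectI conjI allI impI)
    show "y e \<in> cube"
      using x \<open>w \<in> cube\<close> e by (simp add: y_def mem_cube_iff convex_bound_le)
    fix i j assume ij: "1 \<le> i" "i < j" "j \<le> CARD('n)"
    have "(1 - e) * x $ \<sigma> i \<le> (1 - e) * x $ \<sigma> j" using sorted[of i j] ij e by simp
    moreover have "e * w $ \<sigma> i < e * w $ \<sigma> j" using ij e by (simp add: w\<sigma> divide_strict_right_mono)
    ultimately show "y e $ \<sigma> i < y e $ \<sigma> j" by (simp add: y_def)
  qed
  then have eventually_region: "\<forall>\<^sub>F e in at_right 0. y e \<in> perm_region \<sigma>"
    using eventually_at_right_real[of 0 1] by (auto elim: eventually_mono)
  have y_tendsto: "(y \<longlongrightarrow> x) (at_right 0)"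
    unfolding y_def by (auto intro!: tendsto_eq_intros)
  have "((\<lambda>e. f (y e)) \<longlongrightarrow> f x) (at_right 0)"
  proof (rule continuous_on_tendsto_compose[OF _ y_tendsto x])
    show "continuous_on cube f" using lov by (simp add: lovasz_extension_def)
    show "\<forall>\<^sub>F e in at_right 0. y e \<in> cube"
      using eventually_region by (rule eventually_mono) (simp add: perm_region_def)
  qed
  moreover have "((\<lambda>e. f (y e)) \<longlongrightarrow> R x) (at_right 0)"
  proof (rule Lim_transform_eventually)
    show "((\<lambda>e. R (y e)) \<longlongrightarrow> R x) (at_right 0)"
      unfolding R_def using y_tendsto by (intro tendsto_intros)
    show "\<forall>\<^sub>F e in at_right 0. R (y e) = f (y e)"
      using eventually_region
      by (rule eventually_mono) (simp add: R_def lovasz_extension_on_perm_region[OF lov \<sigma>])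
  qed
  ultimately show ?thesis by (simp add: R_def tendsto_unique[OF trivial_limit_at_right_real])
qed

lemma lovasz_extension_os:
  fixes f :: "real^'n::finite \<Rightarrow> real"
  assumes "lovasz_extension f" "bij_betw \<sigma> {1..CARD('n)} UNIV" "x \<in> cube"
    and \<sigma>_sorts: "\<And>i. i \<in> {1..CARD('n)} \<Longrightarrow> x $ \<sigma> i = os x i"
  shows "f x = f 0 + (\<Sum>i=1..CARD('n). os x i * lovasz_increment f \<sigma> i)"
proof -
  have "f x = f 0 + (\<Sum>i=1..CARD('n). x $ \<sigma> i * lovasz_increment f \<sigma> i)"
    by (rule lovasz_extension_sorted[OF assms(1-3)]) (simp add: \<sigma>_sorts os_mono[OF \<open>x \<in> cube\<close>])
  then show ?thesis by (simp add: \<sigma>_sorts)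
qed

lemma sum_permutations_lovasz_increment:
  assumes \<sigma>: "bij_betw \<sigma> {1..CARD('n::finite)} (UNIV::'n set)"
    and e: "bij_betw e {1..CARD('n)} (UNIV::'n set)" and "1 \<le> i"
  shows "(\<Sum>\<pi> | \<pi> permutes UNIV. lovasz_increment f (\<pi> \<circ> \<sigma>) i) =
         (\<Sum>\<pi> | \<pi> permutes UNIV. lovasz_increment f (\<pi> \<circ> e) i)"
proof -
  define \<rho> where "\<rho> = \<sigma> \<circ> inv_into {1..CARD('n)} e"
  have "bij_betw \<rho> UNIV UNIV"
    unfolding \<rho>_def using bij_betw_inv_into[OF e] \<sigma> by (rule bij_betw_trans)
  then have \<rho>: "\<rho> permutes UNIV" by (rule bij_imp_permutes) simp
  have image_eq: "(\<pi> \<circ> \<rho> \<circ> e) ` {j..CARD('n)} = (\<pi> \<circ> \<sigma>) ` {j..CARD('n)}" if "1 \<le> j" for \<pi> j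
    using that e by (force simp: \<rho>_def bij_betw_inv_into_left image_iff)
  have "lovasz_increment f (\<pi> \<circ> \<rho> \<circ> e) i = lovasz_increment f (\<pi> \<circ> \<sigma>) i" for \<pi>
    unfolding lovasz_increment_def image_eq[OF \<open>1 \<le> i\<close>] image_eq[OF le_SucI[OF \<open>1 \<le> i\<close>]] ..
  then show ?thesis
    using sum_permutations_compose_right[OF \<rho>, of "\<lambda>\<pi>. lovasz_increment f (\<pi> \<circ> e) i"]
    by (simp add: o_assoc)
qed

lemma lovasz_extension_permute_vec:
  fixes f :: "real^'n::finite \<Rightarrow> real"
  assumes lov: "lovasz_extension f" and \<pi>: "\<pi> permutes UNIV" and x: "x \<in> cube"
    and \<sigma>: "bij_betw \<sigma> {1..CARD('n)} UNIV" and \<sigma>_sorts: "\<And>i. i \<in> {1..CARD('n)} \<Longrightarrow> x $ \<sigma> i = os x i"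
  shows "f (permute_vec \<pi> x) = f 0 + (\<Sum>i=1..CARD('n). os x i * lovasz_increment f (inv \<pi> \<circ> \<sigma>) i)"
proof -
  have "bij_betw (inv \<pi> \<circ> \<sigma>) {1..CARD('n)} UNIV"
    using \<sigma> permutes_imp_bij[OF permutes_inv[OF \<pi>]] by (rule bij_betw_trans)
  moreover have "permute_vec \<pi> x \<in> cube" using x by (simp add: mem_cube_iff)
  ultimately show ?thesis
    using lovasz_extension_os[OF lov, of "inv \<pi> \<circ> \<sigma>" "permute_vec \<pi> x"] \<pi> \<sigma>_sorts
    by (simp add: os_permute_vec permutes_inverses)
qed

lemma Sym_eq_permute_vec:
  fixes x :: "real^'n::finite"
  shows "Sym f x = (\<Sum>\<pi> | \<pi> permutes UNIV. f (permute_vec \<pi> x)) / fact CARD('n)"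
  by (simp add: Sym_def permute_vec_def)

lemma Sym_lovasz_extension_os_expansion:
  fixes f :: "real^'n::finite \<Rightarrow> real"
  assumes lov: "lovasz_extension f"
  obtains d where "\<And>x. x \<in> cube \<Longrightarrow> Sym f x = f 0 + (\<Sum>i=1..CARD('n). d i * os x i)"
proof -
  let ?P = "{\<pi>. \<pi> permutes (UNIV::'n set)}"
  obtain e where e: "bij_betw e {1..CARD('n)} (UNIV::'n set)"
    using obtain_sorting_enumeration[of "0::real^'n"] by blast
  define d where "d i = (\<Sum>\<pi>\<in>?P. lovasz_increment f (\<pi> \<circ> e) i) / fact CARD('n)" for i
  have "Sym f x = f 0 + (\<Sum>i=1..CARD('n). d i * os x i)" if x: "x \<in> cube" for x
  proof -
    obtain \<sigma> where \<sigma>: "bij_betw \<sigma> {1..CARD('n)} (UNIV::'n set)"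
      and \<sigma>_sorts: "\<And>i. i \<in> {1..CARD('n)} \<Longrightarrow> x $ \<sigma> i = os x i"
      using obtain_sorting_enumeration by blast
    have permuted: "f (permute_vec \<pi> x) =
        f 0 + (\<Sum>i=1..CARD('n). os x i * lovasz_increment f (inv \<pi> \<circ> \<sigma>) i)"
      if "\<pi> \<in> ?P" for \<pi>
      using lovasz_extension_permute_vec[OF lov _ x \<sigma> \<sigma>_sorts] that by simp
    have "Sym f x = (\<Sum>\<pi>\<in>?P. f 0 + (\<Sum>i=1..CARD('n). os x i * lovasz_increment f (inv \<pi> \<circ> \<sigma>) i))
        / fact CARD('n)"
      unfolding Sym_eq_permute_vec using permuted
      by (intro arg_cong[where f="\<lambda>s. s / _"] sum.cong) auto
    also have "\<dots> = f 0 + (\<Sum>i=1..CARD('n). os x i *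
        (\<Sum>\<pi>\<in>?P. lovasz_increment f (inv \<pi> \<circ> \<sigma>) i) / fact CARD('n))"
      by (simp add: sum.distrib card_permutations sum_distrib_left sum.swap[of _ ?P]
          add_divide_distrib sum_divide_distrib)
    also have "\<dots> = f 0 + (\<Sum>i=1..CARD('n). d i * os x i)"
    proof (intro arg_cong2[where f="(+)"] refl sum.cong)
      fix i assume "i \<in> {1..CARD('n)}"
      then have "(\<Sum>\<pi>\<in>?P. lovasz_increment f (inv \<pi> \<circ> \<sigma>) i) = (\<Sum>\<pi>\<in>?P. lovasz_increment f (\<pi> \<circ> e) i)"
        using sum_permutations_inverse[of "\<lambda>\<pi>. lovasz_increment f (\<pi> \<circ> \<sigma>) i" UNIV]
          sum_permutations_lovasz_increment[OF \<sigma> e, of i f] by simp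
      then show "os x i * (\<Sum>\<pi>\<in>?P. lovasz_increment f (inv \<pi> \<circ> \<sigma>) i) / fact CARD('n) = d i * os x i"
        by (simp add: d_def)
    qed
    finally show ?thesis .
  qed
  then show ?thesis by (rule that)
qed

section \<open>Integrals of symmetrized functions\<close>

lemma permute_vec_inv:
  assumes "\<pi> permutes UNIV"
  shows "permute_vec (inv \<pi>) (permute_vec \<pi> x) = x" "permute_vec \<pi> (permute_vec (inv \<pi>) x) = x"
  using assms by (simp_all add: vec_eq_iff permutes_inverses)

lemma permute_vec_0 [simp]: "permute_vec \<pi> 0 = 0"
  and permute_vec_1 [simp]: "permute_vec \<pi> 1 = 1"
  by (simp_all add: vec_eq_iff)

lemma continuous_on_permute_vec: "continuous_on S (permute_vec \<pi>)"
  unfolding permute_vec_def by (intro continuous_intros)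

lemma permute_vec_cbox:
  assumes "\<pi> permutes UNIV"
  shows "permute_vec \<pi> ` cbox u v = cbox (permute_vec \<pi> u) (permute_vec \<pi> v)"
proof
  show "permute_vec \<pi> ` cbox u v \<subseteq> cbox (permute_vec \<pi> u) (permute_vec \<pi> v)"
    by (auto simp: mem_box_cart)
  show "cbox (permute_vec \<pi> u) (permute_vec \<pi> v) \<subseteq> permute_vec \<pi> ` cbox u v"
  proof
    fix x assume x: "x \<in> cbox (permute_vec \<pi> u) (permute_vec \<pi> v)"
    have "u $ \<pi> (inv \<pi> b) \<le> x $ inv \<pi> b \<and> x $ inv \<pi> b \<le> v $ \<pi> (inv \<pi> b)" for b
      using x by (simp add: mem_box_cart)
    then have "permute_vec (inv \<pi>) x \<in> cbox u v"
      using assms by (simp add: mem_box_cart permutes_inverses)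
    then show "x \<in> permute_vec \<pi> ` cbox u v" using permute_vec_inv(2)[OF assms] by (metis image_eqI)
  qed
qed

lemma measure_permute_vec_cbox:
  assumes "\<pi> permutes UNIV"
  shows "measure lborel (permute_vec \<pi> ` cbox u v) = measure lborel (cbox u v)"
proof -
  have "cbox (permute_vec \<pi> u) (permute_vec \<pi> v) = {} \<longleftrightarrow> cbox u v = {}"
    using permute_vec_cbox[OF assms, of u v] by auto
  moreover have "(\<Prod>i\<in>UNIV. permute_vec \<pi> v $ i - permute_vec \<pi> u $ i) = (\<Prod>i\<in>UNIV. v $ i - u $ i)"
    using prod.reindex_bij_betw[OF permutes_imp_bij[OF assms], of "\<lambda>i. v $ i - u $ i"] by simp
  ultimately show ?thesis by (simp add: permute_vec_cbox[OF assms] content_cbox_if_cart)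
qed

lemma has_integral_permute_vec:
  assumes \<pi>: "\<pi> permutes UNIV" and F: "(F has_integral I) (cbox 0 (1::real^'n::finite))"
  shows "((\<lambda>x. F (permute_vec \<pi> x)) has_integral I) (cbox 0 (1::real^'n))"
proof -
  have "((\<lambda>x. F (permute_vec \<pi> x)) has_integral (1 / 1) *\<^sub>R I) (permute_vec (inv \<pi>) ` cbox 0 1)"
  proof (rule has_integral_twiddle)
    show "\<And>x. continuous (at x) (permute_vec \<pi>)"
      using continuous_on_permute_vec by (metis continuous_on_eq_continuous_at open_UNIV UNIV_I)
    show "\<And>u v. \<exists>w z. permute_vec \<pi> ` cbox u v = cbox w z"
      using permute_vec_cbox[OF \<pi>] by blast
    show "\<And>u v. \<exists>w z. permute_vec (inv \<pi>) ` cbox u v = cbox w z"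
      using permute_vec_cbox[OF permutes_inv[OF \<pi>]] by blast
    show "\<And>u v. measure lborel (permute_vec \<pi> ` cbox u v) = 1 * measure lborel (cbox u v)"
      using measure_permute_vec_cbox[OF \<pi>] by simp
  qed (use F permute_vec_inv[OF \<pi>] in auto)
  moreover have "permute_vec (inv \<pi>) ` cbox 0 1 = cbox (0::real^'n) 1"
    using permute_vec_cbox[OF permutes_inv[OF \<pi>], of 0 1] by simp
  ultimately show ?thesis by simp
qed

lemma integral_Sym_mult_symmetric:
  fixes f h :: "real^'n::finite \<Rightarrow> real"
  assumes f: "continuous_on cube f" and h: "continuous_on cube h"
    and h_sym: "\<And>\<pi> x. \<pi> permutes UNIV \<Longrightarrow> h (permute_vec \<pi> x) = h x"
  shows "integral cube (\<lambda>x. Sym f x * h x) = integral cube (\<lambda>x. f x * h x)"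
proof -
  let ?P = "{\<pi>. \<pi> permutes (UNIV::'n set)}"
  have "continuous_on cube (\<lambda>x. f (permute_vec \<pi> x))" if "\<pi> \<in> ?P" for \<pi>
    using that by (intro continuous_on_compose2[OF f continuous_on_permute_vec])
      (auto simp: mem_cube_iff)
  then have integrable: "(\<lambda>x. f (permute_vec \<pi> x) * h x) integrable_on cube" if "\<pi> \<in> ?P" for \<pi>
    using that h by (intro integrable_continuous continuous_on_mult) auto
  have "integral cube (\<lambda>x. f (permute_vec \<pi> x) * h x) = integral cube (\<lambda>x. f x * h x)"
    if "\<pi> \<in> ?P" for \<pi>
  proof -
    have "((\<lambda>x. f x * h x) has_integral integral cube (\<lambda>x. f x * h x)) cube"
      using f h by (intro integrable_integral integrable_continuous continuous_on_mult)
    from has_integral_permute_vec[OF _ this] that h_sym show ?thesis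
      by (simp add: integral_unique)
  qed
  then have "integral cube (\<lambda>x. \<Sum>\<pi>\<in>?P. f (permute_vec \<pi> x) * h x) = fact CARD('n)
    * integral cube (\<lambda>x. f x * h x)"
    using integral_sum[of ?P, OF _ integrable] by (simp add: card_permutations)
  then show ?thesis
    by (simp add: Sym_eq_permute_vec sum_distrib_right)
qed

section \<open>Fubini along one coordinate\<close>

definition vec_upd :: "real^'n::finite \<Rightarrow> 'n \<Rightarrow> real \<Rightarrow> real^'n" where
  "vec_upd x b t = (\<chi> a. if a = b then t else x $ a)"

lemma vec_upd_nth: "vec_upd x b t $ a = (if a = b then t else x $ a)"
  by (simp add: vec_upd_def)

lemma vec_upd_same [simp]: "vec_upd x b t $ b = t"
  and vec_upd_other [simp]: "a \<noteq> b \<Longrightarrow> vec_upd x b t $ a = x $ a"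
  and vec_upd_vec_upd [simp]: "vec_upd (vec_upd x b t) b s = vec_upd x b s"
  and vec_upd_self [simp]: "vec_upd x b (x $ b) = x"
  by (simp_all add: vec_upd_def vec_eq_iff)

lemma continuous_on_vec_upd [continuous_intros]:
  assumes "continuous_on S f" "continuous_on S g"
  shows "continuous_on S (\<lambda>p. vec_upd (f p) b (g p))"
  unfolding vec_upd_def
proof (intro continuous_on_vec_lambda)
  show "continuous_on S (\<lambda>p. if a = b then g p else f p $ a)" for a
    by (cases "a = b") (auto intro!: continuous_intros assms)
qed

lemma measurable_vec_upd [measurable]:
  "(\<lambda>p. vec_upd (fst p) b (snd p)) \<in> borel_measurable (borel :: ((real^'n::finite) \<times> real) measure)"
  "(\<lambda>t. vec_upd x b t) \<in> borel_measurable (borel :: real measure)"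
  by (rule borel_measurable_continuous_onI, intro continuous_intros)+

lemma box_Pair_eq: "box (a, c) (b, d) = box a b \<times> box c d"
  by (force simp: box_def Basis_prod_def)

lemma emeasure_lborel_box_cart:
  assumes "\<And>a. p $ a \<le> q $ a"
  shows "emeasure lborel (box p (q::real^'n::finite)) = ennreal (\<Prod>a\<in>UNIV. q $ a - p $ a)"
proof -
  have "\<forall>j\<in>Basis. p \<bullet> j \<le> q \<bullet> j"
    using assms by (auto simp: Basis_vec_def cart_eq_inner_axis[symmetric])
  then have "emeasure lborel (box p q) = (\<Prod>j\<in>Basis. (q - p) \<bullet> j)"
    by (simp add: emeasure_lborel_box_eq)
  also have "(\<Prod>j\<in>Basis. (q - p) \<bullet> j) = (\<Prod>a\<in>UNIV. q $ a - p $ a)"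
    by (simp add: Basis_vec_def cart_eq_inner_axis axis_eq_axis prod.UNION_disjoint inner_diff_left)
  finally show ?thesis by simp
qed

text \<open>Exchanging coordinate b of a point of real^'n with an extra real coordinate preserves
  Lebesgue measure on real^'n \<times> real; this is how Fubini's theorem is applied to a single
  coordinate of real^'n.\<close>

definition coord_exchange :: "'n::finite \<Rightarrow> (real^'n) \<times> real \<Rightarrow> (real^'n) \<times> real" where
  "coord_exchange b p = (vec_upd (fst p) b (snd p), fst p $ b)"

lemma measurable_coord_exchange [measurable]: "coord_exchange b \<in> borel_measurable borel"
  unfolding coord_exchange_def by (intro borel_measurable_continuous_onI continuous_intros)

lemma prod_vec_upd_exchange:
  fixes l1 u1 :: "real^'n::finite"
  shows "(\<Prod>a\<in>UNIV. vec_upd u1 b u2 $ a - vec_upd l1 b l2 $ a) * (u1 $ b - l1 $ b) =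
         (\<Prod>a\<in>UNIV. u1 $ a - l1 $ a) * (u2 - l2)"
  by (simp add: prod.remove[of UNIV b])

lemma distr_lborel_coord_exchange:
  "distr lborel borel (coord_exchange b) = (lborel :: ((real^'n::finite) \<times> real) measure)"
proof (rule lborel_eqI[symmetric])
  fix l u :: "(real^'n) \<times> real"
  assume lu: "\<And>j. j \<in> Basis \<Longrightarrow> l \<bullet> j \<le> u \<bullet> j"
  obtain l1 l2 u1 u2 where l: "l = (l1, l2)" and u: "u = (u1, u2)" by (cases l, cases u) auto
  have c1: "l1 $ a \<le> u1 $ a" for a
  proof -
    have "(axis a 1, 0) \<in> (Basis :: ((real^'n) \<times> real) set)"
      by (auto simp: Basis_prod_def Basis_vec_def)
    from lu[OF this] show ?thesis by (simp add: l u cart_eq_inner_axis)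
  qed
  have c2: "l2 \<le> u2" using lu[of "(0, 1)"] by (simp add: l u Basis_prod_def)
  have pre: "coord_exchange b -` box l u =
      box (vec_upd l1 b l2) (vec_upd u1 b u2) \<times> box (l1 $ b) (u1 $ b)" (is "_ = ?B")
  proof (rule set_eqI)
    fix p :: "(real^'n) \<times> real"
    obtain x t where p: "p = (x, t)" by (cases p) auto
    show "p \<in> coord_exchange b -` box l u \<longleftrightarrow> p \<in> ?B"
      unfolding p l u coord_exchange_def box_Pair_eq
      by (auto simp: mem_box_cart vec_upd_nth split: if_splits)
  qed
  have "emeasure (distr lborel borel (coord_exchange b)) (box l u)
    = emeasure lborel (coord_exchange b -` box l u)"
    by (subst emeasure_distr) auto
  also have "\<dots> = emeasure (lborel \<Otimes>\<^sub>M lborel)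
    (box (vec_upd l1 b l2) (vec_upd u1 b u2) \<times> box (l1 $ b) (u1 $ b))"
    by (simp add: pre lborel_prod)
  also have "\<dots> = emeasure lborel (box (vec_upd l1 b l2) (vec_upd u1 b u2))
    * emeasure lborel (box (l1 $ b) (u1 $ b))"
    by (rule lborel.emeasure_pair_measure_Times) auto
  also have "\<dots> = ennreal ((\<Prod>a\<in>UNIV. vec_upd u1 b u2 $ a - vec_upd l1 b l2 $ a) * (u1 $ b - l1 $ b))"
    using c1 c2 by (simp add: emeasure_lborel_box_cart vec_upd_nth ennreal_mult prod_nonneg)
  also have "\<dots> = ennreal ((\<Prod>a\<in>UNIV. u1 $ a - l1 $ a) * (u2 - l2))"
    by (simp add: prod_vec_upd_exchange)
  also have "\<dots> = emeasure lborel (box l1 u1) * emeasure lborel (box l2 u2)"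
    using c1 c2 by (simp add: emeasure_lborel_box_cart ennreal_mult prod_nonneg)
  also have "\<dots> = emeasure (lborel \<Otimes>\<^sub>M lborel) (box l1 u1 \<times> box l2 u2)"
    by (rule lborel.emeasure_pair_measure_Times[symmetric]) auto
  also have "\<dots> = emeasure lborel (box l u)"
    by (simp add: l u box_Pair_eq lborel_prod)
  also have "\<dots> = (\<Prod>j\<in>Basis. (u - l) \<bullet> j)"
    using lu by (simp add: emeasure_lborel_box_eq)
  finally show "emeasure (distr lborel borel (coord_exchange b)) (box l u)
    = (\<Prod>j\<in>Basis. (u - l) \<bullet> j)" .
qed simp

lemma nn_integral_lborel_coord:
  fixes F :: "real^'n::finite \<Rightarrow> ennreal"
  assumes [measurable]: "F \<in> borel_measurable borel"
  shows "(\<integral>\<^sup>+x. F x \<partial>lborel) =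
    (\<integral>\<^sup>+x. indicator {0..1} (x $ b) * (\<integral>\<^sup>+t. F (vec_upd x b t) \<partial>lborel) \<partial>lborel)"
proof -
  define G :: "(real^'n) \<times> real \<Rightarrow> ennreal" where "G q = indicator {0..1} (snd q) * F (fst q)" for q
  have Gm[measurable]: "G \<in> borel_measurable borel" unfolding G_def borel_prod[symmetric]
    by measurable
  have "(\<integral>\<^sup>+x. indicator {0..1} (x $ b) * (\<integral>\<^sup>+t. F (vec_upd x b t) \<partial>lborel) \<partial>lborel) =
        (\<integral>\<^sup>+x. (\<integral>\<^sup>+t. G (coord_exchange b (x, t)) \<partial>lborel) \<partial>lborel)"
    by (intro nn_integral_cong) (simp add: G_def coord_exchange_def nn_integral_cmult)
  also have "\<dots> = (\<integral>\<^sup>+p. G (coord_exchange b p) \<partial>(lborel \<Otimes>\<^sub>M lborel))"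
    by (rule lborel.nn_integral_fst) (simp add: lborel_prod)
  also have "\<dots> = (\<integral>\<^sup>+p. G (coord_exchange b p) \<partial>lborel)" by (simp add: lborel_prod)
  also have "\<dots> = (\<integral>\<^sup>+q. G q \<partial>(distr lborel borel (coord_exchange b)))"
    by (subst nn_integral_distr) auto
  also have "\<dots> = (\<integral>\<^sup>+q. G q \<partial>lborel)" by (simp add: distr_lborel_coord_exchange)
  also have "\<dots> = (\<integral>\<^sup>+q. G q \<partial>(lborel \<Otimes>\<^sub>M lborel))" by (simp add: lborel_prod)
  also have "\<dots> = (\<integral>\<^sup>+x. (\<integral>\<^sup>+t. G (x, t) \<partial>lborel) \<partial>lborel)"
    by (rule lborel.nn_integral_fst[symmetric]) (simp add: lborel_prod)
  also have "\<dots> = (\<integral>\<^sup>+x. F x \<partial>lborel)"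
    by (simp add: G_def nn_integral_multc)
  finally show ?thesis by simp
qed

lemma vec_upd_mem_cube_iff: "vec_upd x b t \<in> cube \<longleftrightarrow> vec_upd x b 0 \<in> cube \<and> 0 \<le> t \<and> t \<le> 1"
  by (auto simp: mem_cube_iff vec_upd_nth)

lemma indicator_cube_vec_upd:
  "indicator cube (vec_upd x b t)
    = (indicator {x. vec_upd x b 0 \<in> cube} x * indicator {0..1} t :: ennreal)"
  using vec_upd_mem_cube_iff[of x b t] by (simp add: indicator_def)

section \<open>Reflecting one coordinate inside its gap\<close>

lemma card_Collect_split_point:
  "card {a::'n::finite. P a} = card {a. a \<noteq> b \<and> P a} + (if P b then 1 else 0)"
proof -
  have "{a. P a} = (if P b then insert b {a. a \<noteq> b \<and> P a} else {a. a \<noteq> b \<and> P a})" by auto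
  then show ?thesis by simp
qed

lemma card_Collect_vec_upd_0:
  "card {a::'n::finite. P ((x::real^'n) $ a)} + (if P 0 then 1 else 0) =
   card {a. P (vec_upd x b 0 $ a)} + (if P (x $ b) then 1 else 0)"
proof -
  have "{a. a \<noteq> b \<and> P (x $ a)} = {a. a \<noteq> b \<and> P (vec_upd x b 0 $ a)}" by auto
  then show ?thesis
    using card_Collect_split_point[of "\<lambda>a. P (x $ a)" b]
      card_Collect_split_point[of "\<lambda>a. P (vec_upd x b 0 $ a)" b] by simp
qed

lemma os_1_vec_upd_0:
  assumes "vec_upd x b 0 \<in> cube"
  shows "os (vec_upd x b 0) 1 = (0::real)"
proof -
  have "b \<in> {a. vec_upd x b 0 $ a \<le> 0}" by simp
  then have "{a. vec_upd x b 0 $ a \<le> 0} \<noteq> {}" by blast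
  then have "1 \<le> card {a. vec_upd x b 0 $ a \<le> 0}" by (simp add: Suc_le_eq card_gt_0_iff)
  then have "os (vec_upd x b 0) 1 \<le> 0" by (subst os_le_iff) auto
  then show ?thesis using os_nonneg[OF assms, of 1] by simp
qed

text \<open>Setting coordinate b to 0 makes it the smallest coordinate, so gap_lower b k x and
  gap_upper b k x are the (k-1)-st and k-th smallest of the other coordinates (0 and 1 if these do
  not exist): gap_region b k is the set of points whose k-th smallest coordinate is x $ b, without
  ties, and gap_reflect b k reflects x $ b inside that gap.\<close>

definition gap_lower :: "'n::finite \<Rightarrow> nat \<Rightarrow> real^'n \<Rightarrow> real" where
  "gap_lower b k x = os (vec_upd x b 0) k"

definition gap_upper :: "'n::finite \<Rightarrow> nat \<Rightarrow> real^'n \<Rightarrow> real" where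
  "gap_upper b k x = os (vec_upd x b 0) (Suc k)"

definition gap_region :: "'n::finite \<Rightarrow> nat \<Rightarrow> (real^'n) set" where
  "gap_region b k = {x. vec_upd x b 0 \<in> cube \<and> gap_lower b k x < x $ b \<and> x $ b < gap_upper b k x}"

definition gap_reflect :: "'n::finite \<Rightarrow> nat \<Rightarrow> real^'n \<Rightarrow> real^'n" where
  "gap_reflect b k x = vec_upd x b (gap_lower b k x + gap_upper b k x - x $ b)"

lemma gap_region_subset_cube: assumes "x \<in> gap_region b k" shows "x \<in> cube"
proof -
  have y: "vec_upd x b 0 \<in> cube" and lu: "gap_lower b k x < x $ b" "x $ b < gap_upper b k x"
    using assms by (auto simp: gap_region_def)
  have "0 \<le> gap_lower b k x" "gap_upper b k x \<le> 1" using os_nonneg[OF y] os_le_one[OF y]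
    by (auto simp: gap_lower_def gap_upper_def)
  then have "vec_upd x b (x $ b) \<in> cube" using y lu by (subst vec_upd_mem_cube_iff) auto
  then show ?thesis by simp
qed

lemma gap_region_card_bounds:
  assumes x: "x \<in> gap_region b k" and k: "1 \<le> k" "k \<le> CARD('n::finite)"
  shows "x $ b \<le> t \<Longrightarrow> k \<le> card {a. vec_upd (x::real^'n) b 0 $ a \<le> t}"
    and "t < x $ b \<Longrightarrow> card {a. vec_upd x b 0 $ a \<le> t} \<le> k"
proof -
  let ?y = "vec_upd x b 0"
  have lower: "os ?y k < x $ b" and upper: "x $ b < os ?y (Suc k)"
    using x by (auto simp: gap_region_def gap_lower_def gap_upper_def)
  show "k \<le> card {a. ?y $ a \<le> t}" if "x $ b \<le> t"
    using lower that k os_le_iff[of k ?y t] by simp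
  show "card {a. ?y $ a \<le> t} \<le> k" if "t < x $ b"
  proof (cases "k < CARD('n)")
    case True
    then show ?thesis using upper that k os_le_iff[of "Suc k" ?y t] by simp
  next
    case False
    then show ?thesis using k card_mono[of UNIV "{a. ?y $ a \<le> t}"] by simp
  qed
qed

lemma os_gap_region:
  assumes x: "x \<in> gap_region b k" and k: "1 \<le> k" "k \<le> CARD('n::finite)" and i: "i \<le> Suc CARD('n)"
  shows "os (x::real^'n) i =
    (if i < k then os (vec_upd x b 0) (Suc i) else if i = k then x $ b else os (vec_upd x b 0) i)"
    (is "_ = ?rhs")
proof -
  let ?y = "vec_upd x b 0"
  have y: "?y \<in> cube" and "x \<in> cube"
    using x gap_region_subset_cube by (auto simp: gap_region_def)
  consider "i = 0" | "i = Suc CARD('n)" | "1 \<le> i" "i \<le> CARD('n)" using i by linarith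
  then show ?thesis
  proof cases
    case 1
    then show ?thesis using k os_1_vec_upd_0[OF y] by simp
  next
    case 3
    have "os x i \<le> t \<longleftrightarrow> ?rhs \<le> t" for t
    proof (cases "t < 0")
      case True
      then show ?thesis
        using os_nonneg[OF y] os_nonneg[OF \<open>x \<in> cube\<close>, of i] \<open>x \<in> cube\<close>
        by (auto simp: mem_cube_iff not_le intro: less_le_trans)
    next
      case False
      let ?cx = "card {a. x $ a \<le> t}" and ?cy = "card {a. ?y $ a \<le> t}"
      have count: "?cx + 1 = ?cy + (if x $ b \<le> t then 1 else 0)"
        using card_Collect_vec_upd_0[of "\<lambda>v. v \<le> t" x b] False by simp
      have bounds: "x $ b \<le> t \<Longrightarrow> k \<le> ?cy" "t < x $ b \<Longrightarrow> ?cy \<le> k"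
        using gap_region_card_bounds[OF x k] by auto
      have ox: "os x i \<le> t \<longleftrightarrow> i \<le> ?cx" using 3 by (rule os_le_iff)
      consider "i < k" | "i = k" | "k < i" by linarith
      then show ?thesis
      proof cases
        case 1
        have "os ?y (Suc i) \<le> t \<longleftrightarrow> Suc i \<le> ?cy" using 1 k by (intro os_le_iff) auto
        then show ?thesis using 1 ox count bounds by (cases "x $ b \<le> t") auto
      next
        case 2
        then show ?thesis using ox count bounds by (cases "x $ b \<le> t") auto
      next
        case 3
        have "os ?y i \<le> t \<longleftrightarrow> i \<le> ?cy" using \<open>1 \<le> i\<close> \<open>i \<le> CARD('n)\<close> by (intro os_le_iff)
        then show ?thesis using 3 ox count bounds by (cases "x $ b \<le> t") auto
      qed
    qed
    then show ?thesis by (rule eq_if_le_iff)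
  qed (use k in simp)
qed

lemma gap_reflect_nth: "gap_reflect b k x $ b = gap_lower b k x + gap_upper b k x - x $ b"
  by (simp add: gap_reflect_def)

lemma gap_reflect_gap_region: "x \<in> gap_region b k \<Longrightarrow> gap_reflect b k x \<in> gap_region b k"
  by (auto simp: gap_region_def gap_reflect_def gap_lower_def gap_upper_def)

lemma os_gap_reflect:
  assumes x: "x \<in> gap_region b k" and k: "1 \<le> k" "k \<le> CARD('n::finite)" and i: "i \<le> Suc CARD('n)"
  shows "os (gap_reflect b k (x::real^'n)) i =
    (if i = k then os x (k - 1) + os x (Suc k) - os x k else os x i)"
proof -
  have "os x (k - 1) = gap_lower b k x" "os x (Suc k) = gap_upper b k x" "os x k = x $ b"
    using os_gap_region[OF x k, of "k - 1"] os_gap_region[OF x k, of "Suc k"]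
      os_gap_region[OF x k, of k] k
    by (simp_all add: gap_lower_def gap_upper_def)
  then show ?thesis
    using os_gap_region[OF gap_reflect_gap_region[OF x] k i] os_gap_region[OF x k i]
    by (simp add: gap_reflect_nth gap_reflect_def gap_lower_def gap_upper_def)
qed

lemma gap_region_unique:
  assumes "x \<in> gap_region b k" "x \<in> gap_region b' k" "1 \<le> k" "k \<le> CARD('n::finite)"
    and inj: "\<And>a a'. a \<noteq> a' \<Longrightarrow> (x::real^'n) $ a \<noteq> x $ a'"
  shows "b' = b"
proof -
  have "os x k = x $ b" "os x k = x $ b'"
    using os_gap_region[OF assms(1), of k] os_gap_region[OF assms(2), of k] assms(3,4) by simp_all
  then show ?thesis using inj by metis
qed

lemma ex_gap_region:
  assumes x: "x \<in> cube" and inj: "\<And>a a'. a \<noteq> a' \<Longrightarrow> (x::real^'n::finite) $ a \<noteq> x $ a'"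
    and interior: "\<And>a. 0 < x $ a \<and> x $ a < 1" and k: "1 \<le> k" "k \<le> CARD('n)"
  obtains b where "x \<in> gap_region b k"
proof -
  obtain \<sigma> where \<sigma>: "bij_betw \<sigma> {1..CARD('n)} (UNIV::'n set)"
    "\<And>i. i \<in> {1..CARD('n)} \<Longrightarrow> x $ \<sigma> i = os x i"
    using obtain_sorting_enumeration by blast
  define b where "b = \<sigma> k"
  have xb: "x $ b = os x k" using \<sigma>(2)[of k] k by (simp add: b_def)
  let ?y = "vec_upd x b 0"
  let ?lt = "card {a. x $ a < x $ b}" and ?le = "card {a. x $ a \<le> x $ b}"
  have "{a. a \<noteq> b \<and> x $ a \<le> x $ b} = {a. a \<noteq> b \<and> x $ a < x $ b}"
    using inj by (auto simp: order_le_less)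
  then have "?le = ?lt + 1"
    using card_Collect_split_point[of "\<lambda>a. x $ a \<le> x $ b" b]
      card_Collect_split_point[of "\<lambda>a. x $ a < x $ b" b]
    by simp
  moreover have "\<not> k \<le> ?lt" "k \<le> ?le"
    using xb k os_less_iff[of k x "x $ b"] os_le_iff[of k x "x $ b"] by auto
  ultimately have lt: "?lt = k - 1" by linarith
  have y_lt: "card {a. ?y $ a < x $ b} = ?lt + 1" and y_le: "card {a. ?y $ a \<le> x $ b} = ?le"
    using card_Collect_vec_upd_0[of "\<lambda>v. v < x $ b" x b]
      card_Collect_vec_upd_0[of "\<lambda>v. v \<le> x $ b" x b]
      interior[of b]
    by simp_all
  have "gap_lower b k x < x $ b"
    using k y_lt lt os_less_iff[of k ?y "x $ b"] by (simp add: gap_lower_def)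
  moreover have "x $ b < gap_upper b k x"
  proof (cases "k < CARD('n)")
    case True
    then show ?thesis
      using y_le \<open>?le = ?lt + 1\<close> lt k os_le_iff[of "Suc k" ?y "x $ b"] by (simp add: gap_upper_def)
  next
    case False
    then show ?thesis using k interior[of b] by (simp add: gap_upper_def)
  qed
  moreover have "?y \<in> cube" using x by (auto simp: mem_cube_iff vec_upd_nth)
  ultimately show ?thesis using that by (simp add: gap_region_def)
qed

lemma null_sets_coord_eq: "{x::real^'n::finite. x $ a = c} \<in> null_sets lborel"
proof -
  have "negligible {x::real^'n. axis a 1 \<bullet> x = c}"
    by (rule negligible_hyperplane) (simp add: axis_eq_0_iff)
  moreover have "{x::real^'n. axis a 1 \<bullet> x = c} = {x. x $ a = c}"
    by (simp add: inner_commute cart_eq_inner_axis)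
  ultimately have "{x::real^'n. x $ a = c} \<in> null_sets lebesgue"
    by (simp add: negligible_iff_null_sets)
  moreover have "{x::real^'n. x $ a = c} \<in> sets borel"
    by (rule closed_Collect_eq[THEN borel_closed]) (intro continuous_intros)+
  ultimately show ?thesis by (simp add: null_sets_completion_iff)
qed

lemma null_sets_coords_eq:
  assumes "a \<noteq> a'"
  shows "{x::real^'n::finite. x $ a = x $ a'} \<in> null_sets lborel"
proof -
  have "negligible {x::real^'n. (axis a 1 - axis a' 1) \<bullet> x = 0}"
    by (rule negligible_hyperplane) (use assms in \<open>simp add: axis_eq_axis\<close>)
  moreover have "{x::real^'n. (axis a 1 - axis a' 1) \<bullet> x = 0} = {x. x $ a = x $ a'}"
    by (simp add: inner_commute cart_eq_inner_axis inner_diff_right)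
  ultimately have "{x::real^'n. x $ a = x $ a'} \<in> null_sets lebesgue"
    by (simp add: negligible_iff_null_sets)
  moreover have "{x::real^'n. x $ a = x $ a'} \<in> sets borel"
    by (rule closed_Collect_eq[THEN borel_closed]) (intro continuous_intros)+
  ultimately show ?thesis by (simp add: null_sets_completion_iff)
qed

lemma AE_coords_generic:
  "AE x in lborel. (\<forall>a a'. a \<noteq> a' \<longrightarrow> (x::real^'n::finite) $ a \<noteq> x $ a') \<and>
    (\<forall>a. x $ a \<noteq> 0 \<and> x $ a \<noteq> 1)"
proof -
  have "AE x in lborel. \<forall>a\<in>UNIV. \<forall>a'\<in>UNIV. a \<noteq> a' \<longrightarrow> (x::real^'n) $ a \<noteq> x $ a'"
  proof (subst AE_finite_all, simp, intro ballI, subst AE_finite_all, simp, intro ballI)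
    fix a a' :: 'n
    show "AE x in lborel. a \<noteq> a' \<longrightarrow> (x::real^'n) $ a \<noteq> x $ a'"
    proof (cases "a = a'")
      case False
      have "AE x in lborel. (x::real^'n) $ a \<noteq> x $ a'"
        by (rule AE_I'[OF null_sets_coords_eq[OF False]]) auto
      then show ?thesis by simp
    qed simp
  qed
  moreover have "AE x in lborel. \<forall>a\<in>UNIV. (x::real^'n) $ a \<noteq> 0 \<and> x $ a \<noteq> 1"
  proof (subst AE_finite_all, simp, intro ballI)
    fix a :: 'n
    have "AE x in lborel. (x::real^'n) $ a \<noteq> 0" by (intro AE_I'[OF null_sets_coord_eq]) auto
    moreover have "AE x in lborel. (x::real^'n) $ a \<noteq> 1"
      by (intro AE_I'[OF null_sets_coord_eq]) auto
    ultimately show "AE x in lborel. (x::real^'n) $ a \<noteq> 0 \<and> x $ a \<noteq> 1" by eventually_elim auto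
  qed
  ultimately show ?thesis by eventually_elim auto
qed

lemma AE_indicator_cube_eq_sum_gap_region:
  assumes k: "1 \<le> k" "k \<le> CARD('n::finite)"
  shows "AE x in lborel. indicator cube x
    = (\<Sum>b\<in>UNIV. indicator (gap_region b k) (x::real^'n) :: ennreal)"
  using AE_coords_generic
proof eventually_elim
  case (elim x)
  show ?case
  proof (cases "x \<in> cube")
    case True
    have interior: "0 < x $ a \<and> x $ a < 1" for a
    proof -
      have "0 \<le> x $ a" "x $ a \<le> 1" using True mem_cube_iff by blast+
      moreover have "x $ a \<noteq> 0" "x $ a \<noteq> 1" using conjunct2[OF elim] by simp_all
      ultimately show ?thesis by (auto simp: order_less_le)
    qed
    have inj: "\<And>a a'. a \<noteq> a' \<Longrightarrow> x $ a \<noteq> x $ a'" using conjunct1[OF elim] by simp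
    obtain b where b: "x \<in> gap_region b k"
      using ex_gap_region[OF True inj interior k] by blast
    have "indicator (gap_region b' k) x = (if b' = b then 1 else 0 :: ennreal)" for b'
    proof (cases "b' = b")
      case False
      then have "x \<notin> gap_region b' k" using gap_region_unique[OF b _ k inj] by blast
      then show ?thesis using False by simp
    qed (simp add: b)
    then show ?thesis using True by simp
  next
    case False
    then have "x \<notin> gap_region b k" for b using gap_region_subset_cube by blast
    then show ?thesis using False by simp
  qed
qed

lemma continuous_on_gap_lower: "continuous_on S (gap_lower b k)"
  and continuous_on_gap_upper: "continuous_on S (gap_upper b k)"
  unfolding gap_lower_def[abs_def] gap_upper_def[abs_def] by (intro continuous_intros)+

lemma measurable_gap_reflect [measurable]: "gap_reflect b k \<in> borel_measurable borel"
  unfolding gap_reflect_def[abs_def]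
  by (intro borel_measurable_continuous_onI continuous_intros continuous_on_gap_lower
    continuous_on_gap_upper)

lemma sets_gap_region [measurable]: "gap_region (b::'n::finite) k \<in> sets borel"
proof -
  have "gap_region b k
    = (\<lambda>x. vec_upd x b 0) -` cube \<inter> {x. gap_lower b k x < x $ b} \<inter> {x. x $ b < gap_upper b k x}"
    by (auto simp: gap_region_def)
  moreover have "closed ((\<lambda>x::real^'n. vec_upd x b 0) -` cube)"
    by (intro closed_vimage continuous_intros) auto
  moreover have "open {x::real^'n. gap_lower b k x < x $ b}"
    "open {x::real^'n. x $ b < gap_upper b k x}"
    by (intro open_Collect_less continuous_intros continuous_on_gap_lower continuous_on_gap_upper)+
  ultimately show ?thesis by (auto intro: borel_closed borel_open)
qed

lemma indicator_gap_region_vec_upd: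
  "indicator (gap_region b k) (vec_upd x b t) =
    (indicator {x. vec_upd x b 0 \<in> cube} x
      * indicator {gap_lower b k x<..<gap_upper b k x} t :: ennreal)"
  by (simp add: gap_region_def indicator_def gap_lower_def gap_upper_def)

lemma gap_reflect_vec_upd:
  "gap_reflect b k (vec_upd x b t) = vec_upd x b (gap_lower b k x + gap_upper b k x - t)"
  by (simp add: gap_reflect_def gap_lower_def gap_upper_def)

text \<open>On each line parallel to coordinate b, gap_reflect b k is the reflection
  t \<mapsto> gap_lower + gap_upper - t of the interval (gap_lower, gap_upper), which preserves
  Lebesgue measure.\<close>

lemma nn_integral_gap_reflect:
  fixes \<Phi> :: "real^'n::finite \<Rightarrow> ennreal"
  assumes [measurable]: "\<Phi> \<in> borel_measurable borel"
  shows "(\<integral>\<^sup>+x. \<Phi> (gap_reflect b k x) * indicator (gap_region b k) x \<partial>lborel)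
    = (\<integral>\<^sup>+x. \<Phi> x * indicator (gap_region b k) x \<partial>lborel)"
proof -
  have inner: "(\<integral>\<^sup>+t. \<Phi> (gap_reflect b k (vec_upd x b t))
    * indicator (gap_region b k) (vec_upd x b t) \<partial>lborel) =
               (\<integral>\<^sup>+t. \<Phi> (vec_upd x b t) * indicator (gap_region b k) (vec_upd x b t) \<partial>lborel)" for x
  proof -
    let ?L = "gap_lower b k x" and ?U = "gap_upper b k x"
    let ?C = "indicator {x. vec_upd x b 0 \<in> cube} x :: ennreal"
    define g where "g t = \<Phi> (vec_upd x b t) * (?C * indicator {?L<..<?U} t)" for t
    have gm: "g \<in> borel_measurable borel" unfolding g_def by measurable
    have "(\<integral>\<^sup>+t. \<Phi> (vec_upd x b t) * indicator (gap_region b k) (vec_upd x b t) \<partial>lborel)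
      = (\<integral>\<^sup>+t. g t \<partial>lborel)"
      by (simp add: g_def indicator_gap_region_vec_upd)
    also have "\<dots> = (\<integral>\<^sup>+t. g ((?L + ?U) + (-1) * t) \<partial>lborel)"
      using nn_integral_real_affine[OF gm, of "-1" "?L + ?U"] by simp
    also have "\<dots> = (\<integral>\<^sup>+t. \<Phi> (gap_reflect b k (vec_upd x b t))
      * indicator (gap_region b k) (vec_upd x b t) \<partial>lborel)"
    proof (intro nn_integral_cong)
      fix t
      have "indicator {?L<..<?U} (?L + ?U + -1 * t) = (indicator {?L<..<?U} t :: ennreal)"
        by (auto simp: indicator_def)
      then show "g (?L + ?U + -1 * t) = \<Phi> (gap_reflect b k (vec_upd x b t))
        * indicator (gap_region b k) (vec_upd x b t)"
        by (simp add: g_def indicator_gap_region_vec_upd gap_reflect_vec_upd)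
    qed
    finally show ?thesis by simp
  qed
  show ?thesis
    by (subst (1 2) nn_integral_lborel_coord[where b=b]) (simp_all add: inner)
qed

lemma nn_integral_cube_eq_gap_reflect:
  fixes \<Phi>1 \<Phi>2 :: "real^'n::finite \<Rightarrow> ennreal"
  assumes k: "1 \<le> k" "k \<le> CARD('n)"
    and [measurable]: "\<Phi>1 \<in> borel_measurable borel" "\<Phi>2 \<in> borel_measurable borel"
    and H: "\<And>b x. x \<in> gap_region b k \<Longrightarrow> \<Phi>1 (gap_reflect b k x) = \<Phi>2 x"
  shows "(\<integral>\<^sup>+x. \<Phi>1 x * indicator cube x \<partial>lborel) = (\<integral>\<^sup>+x. \<Phi>2 x * indicator cube x \<partial>lborel)"
proof -
  have split: "(\<integral>\<^sup>+x. \<Phi> x * indicator cube x \<partial>lborel)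
    = (\<Sum>b\<in>UNIV. \<integral>\<^sup>+x. \<Phi> x * indicator (gap_region b k) x \<partial>lborel)"
    if [measurable]: "\<Phi> \<in> borel_measurable borel" for \<Phi> :: "real^'n \<Rightarrow> ennreal"
  proof -
    have "(\<integral>\<^sup>+x. \<Phi> x * indicator cube x \<partial>lborel)
      = (\<integral>\<^sup>+x. (\<Sum>b\<in>UNIV. \<Phi> x * indicator (gap_region b k) x) \<partial>lborel)"
      using AE_indicator_cube_eq_sum_gap_region[OF k]
      by (intro nn_integral_cong_AE) (auto elim!: eventually_mono simp: sum_distrib_left)
    also have "\<dots> = (\<Sum>b\<in>UNIV. \<integral>\<^sup>+x. \<Phi> x * indicator (gap_region b k) x \<partial>lborel)"
      by (rule nn_integral_sum) measurable
    finally show ?thesis .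
  qed
  have eq: "(\<integral>\<^sup>+x. \<Phi>1 x * indicator (gap_region b k) x \<partial>lborel)
    = (\<integral>\<^sup>+x. \<Phi>2 x * indicator (gap_region b k) x \<partial>lborel)" for b
  proof -
    have "(\<integral>\<^sup>+x. \<Phi>1 x * indicator (gap_region b k) x \<partial>lborel)
      = (\<integral>\<^sup>+x. \<Phi>1 (gap_reflect b k x) * indicator (gap_region b k) x \<partial>lborel)"
      by (rule nn_integral_gap_reflect[symmetric]) measurable
    also have "\<dots> = (\<integral>\<^sup>+x. \<Phi>2 x * indicator (gap_region b k) x \<partial>lborel)"
      by (intro nn_integral_cong) (simp add: H indicator_def)
    finally show ?thesis .
  qed
  show ?thesis using split[of \<Phi>1] split[of \<Phi>2] eq by simp
qed

lemma nn_integral_cube_continuous: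
  fixes \<phi> :: "real^'n::finite \<Rightarrow> real"
  assumes "continuous_on cube \<phi>" "\<And>x. x \<in> cube \<Longrightarrow> 0 \<le> \<phi> x"
  shows "(\<integral>\<^sup>+x. ennreal (\<phi> x) * indicator cube x \<partial>lborel) = ennreal (integral cube \<phi>)"
  using assms by (intro nn_integral_has_integral_lebesgue' integrable_integral
    integrable_continuous)

lemma integral_cube_eq_gap_reflect:
  fixes \<phi>1 \<phi>2 :: "real^'n::finite \<Rightarrow> real"
  assumes k: "1 \<le> k" "k \<le> CARD('n)"
    and cont: "continuous_on UNIV \<phi>1" "continuous_on UNIV \<phi>2"
    and nonneg: "\<And>x. x \<in> cube \<Longrightarrow> 0 \<le> \<phi>1 x" "\<And>x. x \<in> cube \<Longrightarrow> 0 \<le> \<phi>2 x"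
    and reflect: "\<And>b x. x \<in> gap_region b k \<Longrightarrow> \<phi>1 (gap_reflect b k x) = \<phi>2 x"
  shows "integral cube \<phi>1 = integral cube \<phi>2"
proof -
  have [measurable]: "\<phi>1 \<in> borel_measurable borel" "\<phi>2 \<in> borel_measurable borel"
    using cont by (simp_all add: borel_measurable_continuous_onI)
  have "(\<integral>\<^sup>+x. ennreal (\<phi>1 x) * indicator cube x \<partial>lborel)
    = (\<integral>\<^sup>+x. ennreal (\<phi>2 x) * indicator cube x \<partial>lborel)"
    by (rule nn_integral_cube_eq_gap_reflect[OF k]) (auto simp: reflect)
  moreover have "0 \<le> integral cube \<phi>1" "0 \<le> integral cube \<phi>2"
    using nonneg continuous_on_subset[OF cont(1)] continuous_on_subset[OF cont(2)]
    by (auto intro!: integral_nonneg integrable_continuous)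
  ultimately show ?thesis
    using continuous_on_subset[OF cont(1)] continuous_on_subset[OF cont(2)] nonneg
    by (simp add: nn_integral_cube_continuous)
qed

section \<open>Exchangeability of the spacings\<close>

definition spacing :: "real^'n::finite \<Rightarrow> nat \<Rightarrow> real" where
  "spacing x l = os x l - os x (l - 1)"

lemma continuous_on_spacing [continuous_intros]:
  "continuous_on S f \<Longrightarrow> continuous_on S (\<lambda>x. spacing (f x :: real^'n::finite) l)"
  unfolding spacing_def by (intro continuous_intros)

lemma spacing_nonneg: "x \<in> cube \<Longrightarrow> l \<le> Suc CARD('n::finite) \<Longrightarrow> 0 \<le> spacing (x::real^'n) l"
  unfolding spacing_def using os_mono[of x "l - 1" l] by simp

lemma sum_spacing: "(\<Sum>l=1..j. spacing x l) = os x j"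
  by (induction j) (simp_all add: spacing_def atLeastAtMostSuc_conv)

lemma spacing_gap_reflect:
  assumes x: "x \<in> gap_region b k" and k: "1 \<le> k" "k \<le> CARD('n::finite)"
    and l: "1 \<le> l" "l \<le> Suc CARD('n)"
  shows "spacing (gap_reflect b k (x::real^'n)) l = spacing x (Transposition.transpose k (Suc k) l)"
proof -
  have os: "os (gap_reflect b k x) i
    = (if i = k then os x (k - 1) + os x (Suc k) - os x k else os x i)"
    if "i \<le> Suc CARD('n)" for i
    using os_gap_reflect[OF x k] that by simp
  consider "l = k" | "l = Suc k" | "l \<noteq> k" "l \<noteq> Suc k" by blast
  then show ?thesis
  proof cases
    case 1
    moreover have "k - 1 \<noteq> k" using k by simp
    ultimately show ?thesis using os[of k] os[of "k - 1"] k by (simp add: spacing_def)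
  next
    case 2
    then show ?thesis using os[of k] os[of "Suc k"] k by (simp add: spacing_def)
  next
    case 3
    then have "l - 1 \<noteq> k" using l by linarith
    then show ?thesis using 3 os[of l] os[of "l - 1"] l by (simp add: spacing_def)
  qed
qed

definition spacing_moment :: "'n::finite itself \<Rightarrow> nat \<Rightarrow> nat \<Rightarrow> real" where
  "spacing_moment T l m = integral (cube :: (real^'n) set) (\<lambda>x. spacing x l * spacing x m)"

lemma spacing_moment_commute: "spacing_moment T l m = spacing_moment T m l"
  by (simp add: spacing_moment_def mult.commute)

lemma spacing_moment_transpose:
  assumes k: "1 \<le> k" "k < Suc CARD('n::finite)"
    and "1 \<le> l" "l \<le> Suc CARD('n)" "1 \<le> m" "m \<le> Suc CARD('n)"
  shows "spacing_moment TYPE('n) (Transposition.transpose k (Suc k) l)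
    (Transposition.transpose k (Suc k) m) =
    spacing_moment TYPE('n) l m"
  unfolding spacing_moment_def
proof (rule integral_cube_eq_gap_reflect)
  let ?\<tau> = "Transposition.transpose k (Suc k)"
  have \<tau>: "1 \<le> ?\<tau> l" "?\<tau> l \<le> Suc CARD('n)" "1 \<le> ?\<tau> m" "?\<tau> m \<le> Suc CARD('n)"
    using assms by (auto simp: Transposition.transpose_def)
  show "0 \<le> spacing x (?\<tau> l) * spacing x (?\<tau> m)" if "x \<in> cube" for x :: "real^'n"
    using that \<tau> by (simp add: spacing_nonneg)
  show "0 \<le> spacing x l * spacing x m" if "x \<in> cube" for x :: "real^'n"
    using that assms by (simp add: spacing_nonneg)
  show "spacing (gap_reflect b k x) (?\<tau> l) * spacing (gap_reflect b k x) (?\<tau> m) =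
      spacing x l * spacing x m"
    if "x \<in> gap_region b k" for b and x :: "real^'n"
    using that assms \<tau> by (simp add: spacing_gap_reflect)
qed (use k in \<open>auto intro!: continuous_intros\<close>)

locale adjacent_transposition_invariant =
  fixes N :: nat and g :: "nat \<Rightarrow> nat \<Rightarrow> 'a"
  assumes invariant: "\<And>k l m. 1 \<le> k \<Longrightarrow> k < N \<Longrightarrow> 1 \<le> l \<Longrightarrow> l \<le> N \<Longrightarrow> 1 \<le> m \<Longrightarrow> m \<le> N \<Longrightarrow>
      g (Transposition.transpose k (Suc k) l) (Transposition.transpose k (Suc k) m) = g l m"
begin

lemma diagonal: "1 \<le> l \<Longrightarrow> l \<le> N \<Longrightarrow> g l l = g 1 1"
proof (induction l)
  case (Suc l)
  show ?case
  proof (cases "l = 0")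
    case False
    then have "g (Suc l) (Suc l) = g l l"
      using invariant[of l l l] Suc.prems by simp
    then show ?thesis using Suc False by simp
  qed simp
qed simp

lemma row: "1 \<le> l \<Longrightarrow> l < m \<Longrightarrow> m \<le> N \<Longrightarrow> g l m = g l (Suc l)"
proof (induction m)
  case (Suc m)
  show ?case
  proof (cases "m = l")
    case False
    then have "g l (Suc m) = g l m"
      using invariant[of m l m] Suc.prems by simp
    then show ?thesis using Suc False by simp
  qed simp
qed simp

lemma above_diagonal: "1 \<le> l \<Longrightarrow> l < m \<Longrightarrow> m \<le> N \<Longrightarrow> g l m = g 1 2"
proof (induction l arbitrary: m)
  case (Suc l)
  show ?case
  proof (cases "l = 0")
    case True
    then show ?thesis using Suc.prems row[of 1 m] by (simp add: numeral_2_eq_2)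
  next
    case False
    have "g (Suc l) m = g (Suc l) (Suc (Suc l))" using Suc.prems by (intro row) auto
    also have "\<dots> = g l (Suc (Suc l))" using invariant[of l l "Suc (Suc l)"] Suc.prems False by simp
    also have "\<dots> = g 1 2" using Suc.prems False by (intro Suc.IH) auto
    finally show ?thesis .
  qed
qed simp

end

lemma spacing_moment_eq:
  assumes "1 \<le> l" "l \<le> Suc CARD('n::finite)" "1 \<le> m" "m \<le> Suc CARD('n)"
  shows "spacing_moment TYPE('n) l m =
    (if l = m then spacing_moment TYPE('n) 1 1 else spacing_moment TYPE('n) 1 2)"
proof -
  interpret adjacent_transposition_invariant "Suc CARD('n)" "spacing_moment TYPE('n)"
    by unfold_locales (rule spacing_moment_transpose)
  consider "l = m" | "l < m" | "m < l" by linarith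
  then show ?thesis
  proof cases
    case 3
    then have "spacing_moment TYPE('n) m l = spacing_moment TYPE('n) 1 2"
      using assms by (intro above_diagonal) auto
    then have "spacing_moment TYPE('n) l m = spacing_moment TYPE('n) 1 2"
      by (metis spacing_moment_commute)
    then show ?thesis using 3 by simp
  qed (use assms diagonal[of l] above_diagonal[of l m] in simp_all)
qed

section \<open>Moments of the order statistics\<close>

lemma measure_lborel_cube [simp]: "measure lborel (cube::(real^'n::finite) set) = 1"
proof -
  have "(0::real^'n) \<in> cube" by (simp add: mem_box_cart)
  then have "(cube::(real^'n) set) \<noteq> {}" by blast
  then show ?thesis by (simp add: content_cbox_cart)
qed

lemma emeasure_lborel_cube: "emeasure lborel (cube::(real^'n::finite) set) = 1"
  using emeasure_eq_ennreal_measure[of lborel "cube::(real^'n) set"]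
    emeasure_lborel_cbox_finite[of 0 "1::real^'n"]
  by (simp add: less_top[symmetric])

lemma integrable_on_cube_continuous:
  "continuous_on UNIV f \<Longrightarrow> (f :: real^'n::finite \<Rightarrow> real) integrable_on cube"
  by (metis continuous_on_subset integrable_continuous top_greatest)

lemma integral_os_mult_spacing:
  assumes j: "j \<le> Suc CARD('n::finite)" and m: "1 \<le> m" "m \<le> Suc CARD('n)"
  shows "integral (cube::(real^'n) set) (\<lambda>x. os x j * spacing x m) =
    real j * spacing_moment TYPE('n) 1 2 +
    (if m \<le> j then spacing_moment TYPE('n) 1 1 - spacing_moment TYPE('n) 1 2 else 0)"
proof -
  let ?q0 = "spacing_moment TYPE('n) 1 1" and ?q1 = "spacing_moment TYPE('n) 1 2"
  have "integral (cube::(real^'n) set) (\<lambda>x. os x j * spacing x m) =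
      (\<Sum>l=1..j. spacing_moment TYPE('n) l m)"
    unfolding sum_spacing[symmetric] sum_distrib_right spacing_moment_def
    by (intro integral_sum integrable_on_cube_continuous) (auto intro!: continuous_intros)
  also have "\<dots> = (\<Sum>l=1..j. ?q1 + (if l = m then ?q0 - ?q1 else 0))"
  proof (rule sum.cong)
    fix l assume "l \<in> {1..j}"
    then show "spacing_moment TYPE('n) l m = ?q1 + (if l = m then ?q0 - ?q1 else 0)"
      using j m spacing_moment_eq[where 'n='n, of l m] by simp
  qed simp
  also have "\<dots> = real j * ?q1 + (if m \<le> j then ?q0 - ?q1 else 0)"
    using m by (simp add: sum.distrib)
  finally show ?thesis .
qed

lemma spacing_moments_normalized:
  "(real CARD('n::finite) + 1) *
     (spacing_moment TYPE('n) 1 1 + real CARD('n) * spacing_moment TYPE('n) 1 2) = 1"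
proof -
  have "(\<Sum>m=1..Suc CARD('n). spacing x m) = 1" for x :: "real^'n"
    by (simp only: sum_spacing os_Suc_card)
  then have "1 = integral (cube::(real^'n) set)
    (\<lambda>x. os x (Suc CARD('n)) * (\<Sum>m=1..Suc CARD('n). spacing x m))"
    by simp
  also have "\<dots> = (\<Sum>m=1..Suc CARD('n). integral (cube::(real^'n) set)
    (\<lambda>x. os x (Suc CARD('n)) * spacing x m))"
    unfolding sum_distrib_left
    by (intro integral_sum integrable_on_cube_continuous) (auto intro!: continuous_intros)
  also have "\<dots> = (\<Sum>m=1..Suc CARD('n). (real CARD('n) + 1) * spacing_moment TYPE('n) 1 2 +
      (spacing_moment TYPE('n) 1 1 - spacing_moment TYPE('n) 1 2))"
  proof (rule sum.cong)
    fix m assume "m \<in> {1..Suc CARD('n)}"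
    then show "integral (cube::(real^'n) set) (\<lambda>x. os x (Suc CARD('n)) * spacing x m) =
        (real CARD('n) + 1) * spacing_moment TYPE('n) 1 2 +
        (spacing_moment TYPE('n) 1 1 - spacing_moment TYPE('n) 1 2)"
      using integral_os_mult_spacing[where 'n='n, of "Suc CARD('n)" m] by simp
  qed simp
  finally show ?thesis by (simp add: algebra_simps)
qed

lemma integral_os_sq:
  assumes "i \<le> CARD('n::finite)"
  shows "integral (cube::(real^'n) set) (\<lambda>x. (os x i)\<^sup>2) =
    real i * (spacing_moment TYPE('n) 1 1 + (real i - 1) * spacing_moment TYPE('n) 1 2)"
proof -
  have "integral (cube::(real^'n) set) (\<lambda>x. (os x i)\<^sup>2) =
      (\<Sum>m=1..i. integral (cube::(real^'n) set) (\<lambda>x. os x i * spacing x m))"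
  proof -
    have "(os x i)\<^sup>2 = (\<Sum>m=1..i. os x i * spacing x m)" for x :: "real^'n"
      by (simp only: sum_spacing power2_eq_square sum_distrib_left[symmetric])
    then show ?thesis
      by (simp, intro integral_sum integrable_on_cube_continuous) (auto intro!: continuous_intros)
  qed
  also have "\<dots> = (\<Sum>m=1..i. real i * spacing_moment TYPE('n) 1 2 +
      (spacing_moment TYPE('n) 1 1 - spacing_moment TYPE('n) 1 2))"
    using assms by (intro sum.cong) (simp_all add: integral_os_mult_spacing)
  finally show ?thesis by (simp add: algebra_simps)
qed

lemma nn_integral_cube_coord:
  fixes g :: "real \<Rightarrow> ennreal" and b :: "'n::finite"
  assumes [measurable]: "g \<in> borel_measurable borel"
  shows "(\<integral>\<^sup>+x. g (x $ b) * indicator cube x \<partial>lborel) = (\<integral>\<^sup>+t. g t * indicator {0..1} t \<partial>lborel)"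
proof -
  let ?C = "\<integral>\<^sup>+t. g t * indicator {0..1} t \<partial>lborel"
  have "(\<integral>\<^sup>+x. g (x $ b) * indicator cube x \<partial>lborel) =
      (\<integral>\<^sup>+x. indicator {0..1} (x $ b)
        * (\<integral>\<^sup>+t. g t * indicator cube (vec_upd x b t) \<partial>lborel) \<partial>lborel)"
    by (subst nn_integral_lborel_coord[where b=b]) simp_all
  also have "\<dots> = (\<integral>\<^sup>+x. indicator (cube::(real^'n) set) x * ?C \<partial>lborel)"
  proof (intro nn_integral_cong)
    fix x
    have "(\<integral>\<^sup>+t. g t * indicator cube (vec_upd x b t) \<partial>lborel)
      = indicator {x. vec_upd x b 0 \<in> cube} x * ?C"
      by (simp add: indicator_cube_vec_upd mult.left_commute flip: nn_integral_cmult)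
    moreover have "indicator {0..1} (x $ b) * indicator {x. vec_upd x b 0 \<in> cube} x
      = (indicator cube x :: ennreal)"
      using indicator_cube_vec_upd[of x b "x $ b"] by (simp add: mult.commute)
    ultimately show "indicator {0..1} (x $ b)
      * (\<integral>\<^sup>+t. g t * indicator cube (vec_upd x b t) \<partial>lborel) =
        indicator (cube::(real^'n) set) x * ?C"
      by (simp only: mult.assoc[symmetric])
  qed
  also have "\<dots> = ?C" by (simp add: nn_integral_multc emeasure_lborel_cube)
  finally show ?thesis .
qed

lemma integral_cube_coord_sq: "integral (cube::(real^'n::finite) set) (\<lambda>x. (x $ a)\<^sup>2) = 1/3"
proof -
  have "ennreal (integral (cube::(real^'n) set) (\<lambda>x. (x $ a)\<^sup>2)) =
      (\<integral>\<^sup>+x. ennreal ((x $ a)\<^sup>2) * indicator cube x \<partial>lborel)"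
    by (rule nn_integral_cube_continuous[symmetric]) (intro continuous_intros, simp)
  also have "\<dots> = (\<integral>\<^sup>+t. ennreal (t\<^sup>2) * indicator {0..1} t \<partial>lborel)"
    by (rule nn_integral_cube_coord) simp
  also have "\<dots> = ennreal (1/3)"
  proof -
    have "((\<lambda>t. t ^ 3 / 3) has_real_derivative t\<^sup>2) (at t)" for t :: real
      by (auto intro!: derivative_eq_intros simp: power2_eq_square)
    then show ?thesis using nn_integral_FTC_Icc[of "\<lambda>t. t\<^sup>2" 0 1 "\<lambda>t. t ^ 3 / 3"] by simp
  qed
  finally show ?thesis
    using integral_nonneg[OF integrable_on_cube_continuous, of "\<lambda>x::real^'n. (x $ a)\<^sup>2"]
    by (simp add: continuous_intros)
qed

lemma sum_integral_os_sq:
  "(\<Sum>i=1..CARD('n::finite). integral (cube::(real^'n) set) (\<lambda>x. (os x i)\<^sup>2)) = real CARD('n) / 3"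
proof -
  have "(\<Sum>i=1..CARD('n). integral (cube::(real^'n) set) (\<lambda>x. (os x i)\<^sup>2)) =
      integral (cube::(real^'n) set) (\<lambda>x. \<Sum>i=1..CARD('n). (os x i)\<^sup>2)"
    by (intro integral_sum[symmetric] integrable_on_cube_continuous)
      (auto intro!: continuous_intros)
  also have "\<dots> = integral (cube::(real^'n) set) (\<lambda>x. \<Sum>a\<in>UNIV. (x $ a)\<^sup>2)"
    by (simp only: sum_os[of "\<lambda>v. v\<^sup>2"])
  also have "\<dots> = (\<Sum>a\<in>UNIV. integral (cube::(real^'n) set) (\<lambda>x. (x $ a)\<^sup>2))"
    by (intro integral_sum integrable_on_cube_continuous) (auto intro!: continuous_intros)
  finally show ?thesis by (simp add: integral_cube_coord_sq)
qed

text \<open>The two moments are determined by (sum_l spacing_l)^2 = 1 and by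
  sum_i os_i^2 = sum_a x_a^2, whose integral is n/3.\<close>

lemma spacing_moment_diagonal_minus_off_diagonal:
  "spacing_moment TYPE('n::finite) 1 1 - spacing_moment TYPE('n) 1 2 =
     1 / ((real CARD('n) + 1) * (real CARD('n) + 2))"
proof -
  define N where "N = real CARD('n)"
  define q0 where "q0 = spacing_moment TYPE('n) 1 1"
  define q1 where "q1 = spacing_moment TYPE('n) 1 2"
  have N: "N > 0" by (simp add: N_def)
  have normalized: "(N + 1) * (q0 + N * q1) = 1"
    using spacing_moments_normalized[where 'n='n] by (simp add: N_def q0_def q1_def)
  have "(\<Sum>i=1..CARD('n). real i * (q0 + (real i - 1) * q1)) = N / 3"
    using sum_integral_os_sq[where 'n='n] integral_os_sq[where 'n='n]
    by (simp add: N_def q0_def q1_def)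
  moreover have "(\<Sum>i=1..k. real i * (q0 + (real i - 1) * q1)) =
      q0 * real k * (real k + 1) / 2 + q1 * (real k + 1) * real k * (real k - 1) / 3" for k
    by (induction k) (simp_all add: atLeastAtMostSuc_conv field_simps)
  ultimately have "q0 * N * (N + 1) / 2 + q1 * (N + 1) * N * (N - 1) / 3 = N / 3"
    by (simp add: N_def)
  then have "3 * N * ((N + 1) * q0) + 2 * q1 * ((N + 1) * N * (N - 1)) = 2 * N"
    by (simp add: field_simps)
  moreover have "(N + 1) * q0 = 1 - N * (N + 1) * q1"
    using normalized by (simp add: algebra_simps)
  ultimately have "3 * N * (1 - N * (N + 1) * q1) + 2 * q1 * ((N + 1) * N * (N - 1)) = 2 * N"
    by simp
  then have "N * (1 - q1 * ((N + 1) * (N + 2))) = 0"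
    by (simp add: algebra_simps)
  then have "q1 * ((N + 1) * (N + 2)) = 1"
    using N by simp
  then have q1: "q1 = 1 / ((N + 1) * (N + 2))"
    using N by (simp add: eq_divide_eq)
  have "q0 - q1 = 1 / (N + 1) - (N + 1) * q1"
    using normalized N by (simp add: field_simps)
  also have "\<dots> = 1 / (N + 1) - 1 / (N + 2)"
    using N by (simp add: q1)
  also have "\<dots> = 1 / ((N + 1) * (N + 2))"
    using N by (simp add: field_simps)
  finally show ?thesis by (simp add: N_def q0_def q1_def)
qed

section \<open>Testing against second differences of the order statistics\<close>

lemma integral_os_mult_second_difference:
  assumes j: "j \<le> Suc CARD('n::finite)" and k: "1 \<le> k" "k \<le> CARD('n)"
  shows "integral (cube::(real^'n) set) (\<lambda>x. os x j * (os x (k+1) - 2 * os x k + os x (k-1))) =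
    (if j = k then - 1 / ((real CARD('n) + 1) * (real CARD('n) + 2)) else 0)"
proof -
  have "os x (k+1) - 2 * os x k + os x (k-1) = spacing x (Suc k) - spacing x k" for x :: "real^'n"
    by (simp add: spacing_def)
  then have "integral (cube::(real^'n) set) (\<lambda>x. os x j * (os x (k+1) - 2 * os x k + os x (k-1))) =
      integral cube (\<lambda>x::real^'n. os x j * spacing x (Suc k))
        - integral cube (\<lambda>x::real^'n. os x j * spacing x k)"
    by (simp add: right_diff_distrib, intro integral_diff integrable_on_cube_continuous)
      (auto intro!: continuous_intros)
  also have "\<dots> = (if j = k then
    - (spacing_moment TYPE('n) 1 1 - spacing_moment TYPE('n) 1 2) else 0)"
    using j k by (simp add: integral_os_mult_spacing)
  finally show ?thesis
    using spacing_moment_diagonal_minus_off_diagonal[where 'n='n] by simp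
qed

lemma integral_os_combination_mult_second_difference:
  assumes k: "1 \<le> k" "k \<le> CARD('n::finite)"
  shows "integral (cube::(real^'n) set)
      (\<lambda>x. (c + (\<Sum>i=1..CARD('n). e i * os x i)) * (os x (k+1) - 2 * os x k + os x (k-1))) =
    - e k / ((real CARD('n) + 1) * (real CARD('n) + 2))"
proof -
  let ?\<Delta> = "\<lambda>x::real^'n. os x (k+1) - 2 * os x k + os x (k-1)"
  have "integral cube (\<lambda>x. (c + (\<Sum>i=1..CARD('n). e i * os x i)) * ?\<Delta> x) =
      c * integral cube ?\<Delta> + (\<Sum>i=1..CARD('n). e i * integral cube (\<lambda>x. os x i * ?\<Delta> x))"
  proof -
    have integrable: "(\<lambda>x. os x i * ?\<Delta> x) integrable_on cube" for i
      by (intro integrable_on_cube_continuous continuous_intros)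
    have "(\<lambda>x. (c + (\<Sum>i=1..CARD('n). e i * os x i)) * ?\<Delta> x) =
        (\<lambda>x. c * ?\<Delta> x + (\<Sum>i=1..CARD('n). e i * (os x i * ?\<Delta> x)))"
      by (simp add: distrib_right sum_distrib_right mult.assoc)
    then show ?thesis
      using integrable
      by (simp add: integral_add integral_sum integrable_sum integrable_on_cube_continuous
        continuous_intros)
  qed
  also have "integral cube ?\<Delta> = 0"
    using integral_os_mult_second_difference[where 'n='n, OF _ k, of "Suc CARD('n)"] k by simp
  also have "(\<Sum>i=1..CARD('n). e i * integral cube (\<lambda>x. os x i * ?\<Delta> x)) =
      (\<Sum>i=1..CARD('n). if i = k then - e k / ((real CARD('n) + 1) * (real CARD('n) + 2)) else 0)"
  proof (rule sum.cong)
    fix i assume "i \<in> {1..CARD('n)}"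
    then show "e i * integral cube (\<lambda>x. os x i * ?\<Delta> x) =
        (if i = k then - e k / ((real CARD('n) + 1) * (real CARD('n) + 2)) else 0)"
      using integral_os_mult_second_difference[where 'n='n, of i, OF _ k] by simp
  qed simp
  finally show ?thesis using k by simp
qed

section \<open>The symmetrization is the least squares approximation\<close>

lemma Sym_permute_vec:
  fixes x :: "real^'n::finite"
  assumes "\<sigma> permutes UNIV"
  shows "Sym f (permute_vec \<sigma> x) = Sym f x"
proof -
  have "permute_vec \<pi> (permute_vec \<sigma> x) = permute_vec (\<sigma> \<circ> \<pi>) x" for \<pi>
    by (simp add: vec_eq_iff)
  then show ?thesis
    using setum_permutations_compose_left[OF assms, of "\<lambda>\<pi>. f (permute_vec \<pi> x)"]
    by (simp add: Sym_eq_permute_vec)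
qed

lemma continuous_on_Sym:
  assumes "continuous_on cube f"
  shows "continuous_on (cube::(real^'n::finite) set) (Sym f)"
proof -
  have "continuous_on cube (\<lambda>x::real^'n. f (permute_vec \<pi> x))" for \<pi>
    by (rule continuous_on_compose2[OF assms continuous_on_permute_vec]) (auto simp: mem_cube_iff)
  then show ?thesis
    unfolding Sym_eq_permute_vec[abs_def] by (intro continuous_intros) auto
qed

lemma influence_eq_os_coefficient:
  fixes f :: "real^'n::finite \<Rightarrow> real"
  assumes f: "continuous_on cube f"
    and Sym_f: "\<And>x. x \<in> cube \<Longrightarrow> Sym f x = c + (\<Sum>i=1..CARD('n). d i * os x i)"
    and k: "1 \<le> k" "k \<le> CARD('n)"
  shows "influence f k = d k"
proof -
  let ?\<Delta> = "\<lambda>x::real^'n. os x (k+1) - 2 * os x k + os x (k-1)"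
  have "integral cube (\<lambda>x. f x * ?\<Delta> x) = integral cube (\<lambda>x. Sym f x * ?\<Delta> x)"
    by (rule integral_Sym_mult_symmetric[symmetric])
      (auto intro!: f continuous_intros simp: os_permute_vec)
  also have "\<dots> = integral cube (\<lambda>x. (c + (\<Sum>i=1..CARD('n). d i * os x i)) * ?\<Delta> x)"
    by (intro integral_cong) (simp add: Sym_f)
  also have "\<dots> = - d k / ((real CARD('n) + 1) * (real CARD('n) + 2))"
    by (rule integral_os_combination_mult_second_difference[OF k])
  finally have integral: "integral cube (\<lambda>x. f x * ?\<Delta> x) =
    - d k / ((real CARD('n) + 1) * (real CARD('n) + 2))" .
  have "(real CARD('n) + 1) * (real CARD('n) + 2) \<noteq> 0" by simp
  then show ?thesis
    unfolding influence_def integral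
    by (simp only: mult_minus_left minus_divide_left minus_minus mult.assoc) simp
qed

lemma Sym_lovasz_extension_eq_influence_expansion:
  fixes f :: "real^'n::finite \<Rightarrow> real"
  assumes "lovasz_extension f" "x \<in> cube"
  shows "Sym f x = f 0 + (\<Sum>i=1..CARD('n). influence f i * os x i)"
proof -
  obtain d where d: "\<And>x. x \<in> cube \<Longrightarrow> Sym f x = f 0 + (\<Sum>i=1..CARD('n). d i * os x i)"
    using Sym_lovasz_extension_os_expansion[OF assms(1)] by blast
  have "continuous_on cube f" using assms(1) by (simp add: lovasz_extension_def)
  then have "influence f i = d i" if "i \<in> {1..CARD('n)}" for i
    using that by (intro influence_eq_os_coefficient[OF _ d]) auto
  then show ?thesis using d[OF assms(2)] by simp
qed

text \<open>Sym is the orthogonal projection onto the symmetric functions.\<close>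
lemma L2_dist_sq_Sym_pythagoras:
  fixes f h :: "real^'n::finite \<Rightarrow> real"
  assumes f: "continuous_on cube f" and h: "continuous_on cube h"
    and h_sym: "\<And>\<pi> x. \<pi> permutes UNIV \<Longrightarrow> h (permute_vec \<pi> x) = h x"
  shows "L2_dist_sq f h = L2_dist_sq f (Sym f) + integral cube (\<lambda>x. (Sym f x - h x)\<^sup>2)"
proof -
  define u where "u x = Sym f x - h x" for x
  have Sym_f: "continuous_on cube (Sym f)" by (rule continuous_on_Sym[OF f])
  have u: "continuous_on cube u" unfolding u_def by (intro continuous_intros Sym_f h)
  have "integral cube (\<lambda>x. f x * u x) = integral cube (\<lambda>x. Sym f x * u x)"
    by (rule integral_Sym_mult_symmetric[OF f u, symmetric]) (simp add: u_def h_sym Sym_permute_vec)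
  moreover have "integral cube (\<lambda>x. (f x - Sym f x) * u x) =
      integral cube (\<lambda>x. f x * u x) - integral cube (\<lambda>x. Sym f x * u x)"
    unfolding left_diff_distrib
    by (intro integral_diff integrable_continuous continuous_on_mult f Sym_f u)
  ultimately have orthogonal: "integral cube (\<lambda>x. (f x - Sym f x) * u x) = 0" by simp
  have "L2_dist_sq f h =
      integral cube (\<lambda>x. (f x - Sym f x)\<^sup>2 + 2 * ((f x - Sym f x) * u x) + (u x)\<^sup>2)"
    unfolding L2_dist_sq_def u_def
    by (rule integral_cong) (simp add: power2_eq_square algebra_simps)
  also have "\<dots> = L2_dist_sq f (Sym f) + 2 * integral cube (\<lambda>x. (f x - Sym f x) * u x) +
      integral cube (\<lambda>x. (u x)\<^sup>2)"
    unfolding L2_dist_sq_def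
    by (subst integral_add integral_add integral_mult_right,
        (intro integrable_continuous continuous_intros f Sym_f u)+)+ simp
  finally show ?thesis using orthogonal by (simp add: u_def)
qed

lemma mem_os_span: "(\<lambda>x. c + (\<Sum>i=1..CARD('n::finite). d i * os (x::real^'n) i)) \<in> os_span"
  unfolding os_span_def
  by (intro CollectI exI[of _ "d(0 := c)"]) (auto intro!: ext sum.cong)

lemma os_span_eq_on_cube:
  assumes "g \<in> os_span" "h \<in> os_span" "\<And>x. x \<in> cube \<Longrightarrow> g x = h x"
  shows "g = (h :: real^'n::finite \<Rightarrow> real)"
proof -
  obtain a b where g: "g = (\<lambda>x. a 0 + (\<Sum>i=1..CARD('n). a i * os x i))"
    and h: "h = (\<lambda>x. b 0 + (\<Sum>i=1..CARD('n). b i * os x i))"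
    using assms(1,2) unfolding os_span_def by blast
  define e where "e i = a i - b i" for i
  have zero: "e 0 + (\<Sum>i=1..CARD('n). e i * os x i) = 0" if "x \<in> cube" for x :: "real^'n"
    using assms(3)[OF that] by (simp add: g h e_def algebra_simps sum_subtractf)
  have "e k = 0" if k: "k \<in> {1..CARD('n)}" for k
  proof -
    have "- e k / ((real CARD('n) + 1) * (real CARD('n) + 2)) =
        integral (cube::(real^'n) set)
          (\<lambda>x. (e 0 + (\<Sum>i=1..CARD('n). e i * os x i)) * (os x (k+1) - 2 * os x k + os x (k-1)))"
      by (rule integral_os_combination_mult_second_difference[symmetric]) (use k in auto)
    also have "\<dots> = 0" using zero by (subst integral_cong[where g="\<lambda>_. 0"]) simp_all
    finally show ?thesis by simp
  qed
  moreover have "e 0 = 0"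
    using zero[of 0] calculation by (simp add: mem_cube_iff)
  ultimately show ?thesis
    unfolding g h by (intro ext arg_cong2[where f="(+)"] sum.cong) (auto simp: e_def)
qed

lemma continuous_on_os_span: "g \<in> os_span \<Longrightarrow> continuous_on S (g :: real^'n::finite \<Rightarrow> real)"
  by (auto simp: os_span_def intro!: continuous_intros)

lemma os_span_permute_vec: "g \<in> os_span \<Longrightarrow> \<pi> permutes UNIV \<Longrightarrow> g (permute_vec \<pi> x) = g x"
  by (auto simp: os_span_def os_permute_vec)

lemma continuous_nonneg_integral_eq_0_cube:
  fixes u :: "real^'n::finite \<Rightarrow> real"
  assumes u: "continuous_on cube u" "\<And>x. x \<in> cube \<Longrightarrow> 0 \<le> u x" and "integral cube u = 0"
    and "x \<in> cube"
  shows "u x = 0"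
proof (rule has_integral_0_cbox_imp_0[where f=u and a=0 and b=1 and x=x])
  show "(u has_integral 0) cube"
    using integrable_integral[OF integrable_continuous[OF u(1)]] assms(3) by simp
  have "(\<chi> i. 1/2 :: real^'n) \<in> box 0 1" by (simp add: mem_box_cart)
  then show "box (0::real^'n) 1 \<noteq> {}" by blast
qed (use assms box_subset_cbox in auto)

lemma f_L_eq:
  fixes f :: "real^'n::finite \<Rightarrow> real"
  assumes f: "continuous_on cube f" and g: "g \<in> os_span" and Sym_f: "\<And>x. x \<in> cube \<Longrightarrow> Sym f x = g x"
  shows "f_L f = g"
  unfolding f_L_def
proof (rule the_equality)
  have cont: "continuous_on cube (\<lambda>x. (g x - h x)\<^sup>2)" if "h \<in> os_span" for h
    using continuous_on_power[OF
      continuous_on_diff[OF continuous_on_os_span[OF g] continuous_on_os_span[OF that]]] .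
  have dist: "L2_dist_sq f h = L2_dist_sq f g + integral cube (\<lambda>x. (g x - h x)\<^sup>2)"
    if "h \<in> os_span" for h
  proof -
    have "L2_dist_sq f (Sym f) = L2_dist_sq f g"
      unfolding L2_dist_sq_def by (intro integral_cong) (simp add: Sym_f)
    moreover have "integral cube (\<lambda>x. (Sym f x - h x)\<^sup>2) = integral cube (\<lambda>x. (g x - h x)\<^sup>2)"
      by (intro integral_cong) (simp add: Sym_f)
    ultimately show ?thesis
      using L2_dist_sq_Sym_pythagoras[OF f continuous_on_os_span[OF that]
        os_span_permute_vec[OF that]]
      by simp
  qed
  have "L2_dist_sq f g \<le> L2_dist_sq f h" if "h \<in> os_span" for h
    using dist[OF that] integral_nonneg[OF integrable_continuous[OF cont[OF that]]] by simp
  then show "g \<in> os_span \<and> (\<forall>h\<in>os_span. L2_dist_sq f g \<le> L2_dist_sq f h)"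
    using g by blast
  fix h assume "h \<in> os_span \<and> (\<forall>h'\<in>os_span. L2_dist_sq f h \<le> L2_dist_sq f h')"
  then have h: "h \<in> os_span" and "L2_dist_sq f h \<le> L2_dist_sq f g"
    using g by auto
  then have "integral cube (\<lambda>x. (g x - h x)\<^sup>2) = 0"
    using dist[OF h] integral_nonneg[OF integrable_continuous[OF cont[OF h]]] by simp
  then have "(g x - h x)\<^sup>2 = 0" if "x \<in> cube" for x
    using cont[OF h] that
    by (intro continuous_nonneg_integral_eq_0_cube[where u="\<lambda>x. (g x - h x)\<^sup>2"]) auto
  then show "h = g"
    using os_span_eq_on_cube[OF g h] by simp
qed

theorem proposition23:
  fixes f :: "real^'n::finite \<Rightarrow> real"
  assumes "lovasz_extension f"
  shows "(\<forall>x\<in>cbox 0 1. f_L f x = Sym f x) \<and>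
         (\<forall>x\<in>cbox 0 1. Sym f x = f 0 + (\<Sum>i=1..CARD('n). influence f i * os x i))"
proof -
  have expansion: "Sym f x = f 0 + (\<Sum>i=1..CARD('n). influence f i * os x i)" if "x \<in> cube" for x
    using assms that by (rule Sym_lovasz_extension_eq_influence_expansion)
  have "continuous_on cube f"
    using assms by (simp add: lovasz_extension_def)
  then have "f_L f = (\<lambda>x. f 0 + (\<Sum>i=1..CARD('n). influence f i * os x i))"
    using mem_os_span expansion by (rule f_L_eq)
  with expansion show ?thesis by simp
qed

end
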